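(* Let $X,Y$ be metric spaces, $X\times Y$ with the maximum metric, $\Delta$ a scale and $g,h$ Hausdorff functions. For any set $E\subseteq X\times Y$, $$\mathcal P^{gh}_{\Delta,0}(E)\ge\int^*\underline{\mathcal B}^{g}_0(E_x)\,d\mathcal P^{h}_{\Delta}(x).$$
   Context: In a metric space $(X,d)$: $\operatorname{gap}F=\inf\{d(x,y):x,y\in F,x\neq y\}$, $C_\delta(E)=\sup\{|F|:F\subseteq E,\operatorname{gap}F>\delta\}$. A Hausdorff function is a nondecreasing $g:(0,\infty)\to(0,\infty)$; $gh$ is the pointwise product. A scale is a set $\Delta\subseteq(0,\infty)$ with $0$ in its closure. A packing is a family $\pi=\{(x_i,r_i):i\in I\}\subseteq X\times(0,\infty)$ with $d(x_i,x_j)>r_i$ for $i\ne j$; it is a packing of $E$ if all $x_i\in E$, $\Delta$-valued if all $r_i\in\Delta$, $\delta$-fine if all $r_i\le\delta$; $g(\pi)=\sum_ig(r_i)$. $\mathcal P^g_{\Delta,0}(E)=\inf_{\delta>0}\sup\{g(\pi):\pi$ a $\Delta$-valued $\delta$-fine packing of $E\}$; $\mathcal P^g_\Delta(E)=\inf\{\sum_n\mathcal P^g_{\Delta,0}(E_n):E\subseteq\bigcup_nE_n\}$ (countable covers), a Borel measure on Borel sets; $\underline{\mathcal B}^g_0(E)=\liminf_{\delta\to0}C_\delta(E)g(\delta)$. $E_x=\{y\in Y:(x,y)\in E\}$. Upper integral: $\int^*f\,d\mu=\inf\{\int\varphi\,d\mu:\varphi\ge f$ Borel measurable$\}$. *)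

theory Defs
  imports "HOL-Analysis.Analysis"
begin

definition gap :: "('a \<Rightarrow> 'a \<Rightarrow> real) \<Rightarrow> 'a set \<Rightarrow> ennreal" where
  "gap d F = (INF p \<in> {(x, y). x \<in> F \<and> y \<in> F \<and> x \<noteq> y}. ennreal (d (fst p) (snd p)))"

definition ecard :: "'a set \<Rightarrow> ennreal" where
  "ecard F = (if finite F then of_nat (card F) else \<infinity>)"

definition Cdelta :: "('a \<Rightarrow> 'a \<Rightarrow> real) \<Rightarrow> real \<Rightarrow> 'a set \<Rightarrow> ennreal" where
  "Cdelta d \<delta> E = (SUP F \<in> {F. F \<subseteq> E \<and> gap d F > ennreal \<delta>}. ecard F)"

definition hausdorff_fun :: "(real \<Rightarrow> real) \<Rightarrow> bool" where
  "hausdorff_fun g \<longleftrightarrow> mono_on {0<..} g \<and> (\<forall>t>0. g t > 0)"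

definition scale :: "real set \<Rightarrow> bool" where
  "scale \<Delta> \<longleftrightarrow> \<Delta> \<subseteq> {0<..} \<and> 0 \<in> closure \<Delta>"

text \<open>A packing is a family of pairs (x_i, r_i) with d(x_i,x_j) > r_i for i \<noteq> j;
  such families are necessarily injective, so they are represented as sets of pairs.\<close>
definition packing :: "('a \<Rightarrow> 'a \<Rightarrow> real) \<Rightarrow> ('a \<times> real) set \<Rightarrow> bool" where
  "packing d \<pi> \<longleftrightarrow> (\<forall>p\<in>\<pi>. snd p > 0) \<and>
     (\<forall>p\<in>\<pi>. \<forall>q\<in>\<pi>. p \<noteq> q \<longrightarrow> d (fst p) (fst q) > snd p)"

definition gsum :: "(real \<Rightarrow> real) \<Rightarrow> ('a \<times> real) set \<Rightarrow> ennreal" where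
  "gsum g \<pi> = (SUP F \<in> {F. finite F \<and> F \<subseteq> \<pi>}. \<Sum>p\<in>F. ennreal (g (snd p)))"

definition P0 :: "('a \<Rightarrow> 'a \<Rightarrow> real) \<Rightarrow> real set \<Rightarrow> (real \<Rightarrow> real) \<Rightarrow> 'a set \<Rightarrow> ennreal" where
  "P0 d \<Delta> g E = (INF \<delta> \<in> {0<..}. SUP \<pi> \<in> {\<pi>. packing d \<pi> \<and> fst ` \<pi> \<subseteq> E \<and> snd ` \<pi> \<subseteq> \<Delta>
       \<and> (\<forall>p\<in>\<pi>. snd p \<le> \<delta>)}. gsum g \<pi>)"

definition Pmeas :: "('a \<Rightarrow> 'a \<Rightarrow> real) \<Rightarrow> real set \<Rightarrow> (real \<Rightarrow> real) \<Rightarrow> 'a set \<Rightarrow> ennreal" where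
  "Pmeas d \<Delta> g E = (INF Es \<in> {Es :: nat \<Rightarrow> 'a set. E \<subseteq> (\<Union>n. Es n)}. \<Sum>n. P0 d \<Delta> g (Es n))"

definition Pmeasure :: "real set \<Rightarrow> (real \<Rightarrow> real) \<Rightarrow> 'a::metric_space measure" where
  "Pmeasure \<Delta> g = measure_of UNIV (sets borel) (Pmeas dist \<Delta> g)"

definition lowerB0 :: "('a \<Rightarrow> 'a \<Rightarrow> real) \<Rightarrow> (real \<Rightarrow> real) \<Rightarrow> 'a set \<Rightarrow> ennreal" where
  "lowerB0 d g E = Liminf (at_right 0) (\<lambda>\<delta>. Cdelta d \<delta> E * ennreal (g \<delta>))"

definition upper_integral :: "'a measure \<Rightarrow> ('a \<Rightarrow> ennreal) \<Rightarrow> ennreal" where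
  "upper_integral M f = (INF \<phi> \<in> {\<phi> \<in> borel_measurable M. \<forall>x\<in>space M. f x \<le> \<phi> x}. \<integral>\<^sup>+ x. \<phi> x \<partial>M)"

definition dmax :: "('a::metric_space \<times> 'b::metric_space) \<Rightarrow> ('a \<times> 'b) \<Rightarrow> real" where
  "dmax p q = max (dist (fst p) (fst q)) (dist (snd p) (snd q))"

definition xsection :: "('a \<times> 'b) set \<Rightarrow> 'a \<Rightarrow> 'b set" where
  "xsection E x = {y. (x, y) \<in> E}"

end

theory Submission
  imports Defs
begin

text \<open>Layer-cake argument. For \<open>s > P\<^sup>g\<^sup>h\<^sub>\<Delta>\<^sub>,\<^sub>0(E)\<close> and a level \<open>t\<close>, let \<open>L\<^sub>n(t)\<close> be the set of \<open>x\<close> with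
  \<open>C\<^sub>\<delta>(E\<^sub>x) g(\<delta>) > t\<close> for all \<open>\<delta> < 1/(n+1)\<close>; these sets exhaust \<open>{x. \<underline>B\<^sup>g\<^sub>0(E\<^sub>x) > t}\<close>.
  If \<open>B\<^sub>j = L\<^sub>n(t\<^sub>j)\<close> for increasing levels \<open>t\<^sub>j\<close> and \<open>u(x) = \<Sum>\<^bsub>x \<in> B\<^sub>j\<^esub> (t\<^sub>j - t\<^sub>j\<^sub>-\<^sub>1)\<close>,
  then a fine packing \<open>{(x\<^sub>i, r\<^sub>i)}\<close> of \<open>X\<close> lifts to a packing of \<open>E\<close> for the maximum metric:
  above \<open>(x\<^sub>i, r\<^sub>i)\<close> place the balls of radius \<open>r\<^sub>i\<close> around an \<open>r\<^sub>i\<close>-separated subset of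
  \<open>E\<^bsub>x\<^sub>i\<^esub>\<close> with at least \<open>u(x\<^sub>i)/g(r\<^sub>i)\<close> points. Hence \<open>\<Sum> u(x\<^sub>i) h(r\<^sub>i) \<le> s\<close>.
  Measurable hulls, inner regularity by closed sets, and the fact that packings of positively
  separated sets can be combined turn this into \<open>\<Sum> (t\<^sub>j - t\<^sub>j\<^sub>-\<^sub>1) P\<^sup>h\<^sub>\<Delta>(B\<^sub>j) \<le> s\<close>.
  Taking the levels \<open>t = \<rho>\<^sup>k\<close>, \<open>k \<in> \<int>\<close>, bounds the upper integral by \<open>\<rho> s\<close>.\<close>

definition fine_packing :: "('a \<Rightarrow> 'a \<Rightarrow> real) \<Rightarrow> real set \<Rightarrow> real \<Rightarrow> 'a set \<Rightarrow> ('a \<times> real) set \<Rightarrow> bool"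
  where "fine_packing d \<Delta> \<delta> E \<pi> \<longleftrightarrow>
    finite \<pi> \<and> packing d \<pi> \<and> fst ` \<pi> \<subseteq> E \<and> snd ` \<pi> \<subseteq> \<Delta> \<and> (\<forall>p\<in>\<pi>. snd p \<le> \<delta>)"

definition Pdelta :: "('a \<Rightarrow> 'a \<Rightarrow> real) \<Rightarrow> real set \<Rightarrow> (real \<Rightarrow> real) \<Rightarrow> real \<Rightarrow> 'a set \<Rightarrow> ennreal"
  where "Pdelta d \<Delta> g \<delta> E = (SUP \<pi> \<in> Collect (fine_packing d \<Delta> \<delta> E). \<Sum>p\<in>\<pi>. ennreal (g (snd p)))"

definition weighted_Pdelta :: "('a \<Rightarrow> 'a \<Rightarrow> real) \<Rightarrow> real set \<Rightarrow> (real \<Rightarrow> real) \<Rightarrow> ('a \<Rightarrow> real) \<Rightarrow> real \<Rightarrow> ennreal"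
  where "weighted_Pdelta d \<Delta> h u \<delta> =
    (SUP \<pi> \<in> Collect (fine_packing d \<Delta> \<delta> UNIV). \<Sum>p\<in>\<pi>. ennreal (u (fst p) * h (snd p)))"

lemma packing_subset: "packing d \<pi> \<Longrightarrow> \<pi>' \<subseteq> \<pi> \<Longrightarrow> packing d \<pi>'"
  unfolding packing_def by (meson subsetD)

lemma fine_packing_mono:
  "fine_packing d \<Delta> \<delta> E \<pi> \<Longrightarrow> \<delta> \<le> \<delta>' \<Longrightarrow> E \<subseteq> E' \<Longrightarrow> fine_packing d \<Delta> \<delta>' E' \<pi>"
  unfolding fine_packing_def by force

lemma fine_packing_pos: "fine_packing d \<Delta> \<delta> E \<pi> \<Longrightarrow> p \<in> \<pi> \<Longrightarrow> snd p > 0"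
  unfolding fine_packing_def packing_def by blast

lemma sum_le_Pdelta:
  "fine_packing d \<Delta> \<delta> E \<pi> \<Longrightarrow> (\<Sum>p\<in>\<pi>. ennreal (g (snd p))) \<le> Pdelta d \<Delta> g \<delta> E"
  unfolding Pdelta_def by (rule SUP_upper) simp

lemma Pdelta_leI:
  "(\<And>\<pi>. fine_packing d \<Delta> \<delta> E \<pi> \<Longrightarrow> (\<Sum>p\<in>\<pi>. ennreal (g (snd p))) \<le> s) \<Longrightarrow> Pdelta d \<Delta> g \<delta> E \<le> s"
  unfolding Pdelta_def by (rule SUP_least) simp

lemma Pdelta_mono: "\<delta> \<le> \<delta>' \<Longrightarrow> Pdelta d \<Delta> g \<delta> E \<le> Pdelta d \<Delta> g \<delta>' E"
  unfolding Pdelta_def by (rule SUP_subset_mono) (auto intro: fine_packing_mono)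

lemma sum_le_weighted_Pdelta:
  "fine_packing d \<Delta> \<delta> UNIV \<pi> \<Longrightarrow> (\<Sum>p\<in>\<pi>. ennreal (u (fst p) * h (snd p))) \<le> weighted_Pdelta d \<Delta> h u \<delta>"
  unfolding weighted_Pdelta_def by (rule SUP_upper) simp

text \<open>The sum over an infinite packing is the supremum over its finite subpackings, so only
  finite packings matter.\<close>
lemma P0_eq_INF_Pdelta: "P0 d \<Delta> g E = (INF \<delta> \<in> {0<..}. Pdelta d \<Delta> g \<delta> E)"
  unfolding P0_def
proof (intro INF_cong refl antisym)
  fix \<delta> :: real
  show "(SUP \<pi> \<in> {\<pi>. packing d \<pi> \<and> fst ` \<pi> \<subseteq> E \<and> snd ` \<pi> \<subseteq> \<Delta> \<and> (\<forall>p\<in>\<pi>. snd p \<le> \<delta>)}. gsum g \<pi>)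
      \<le> Pdelta d \<Delta> g \<delta> E"
    unfolding gsum_def
    by (intro SUP_least sum_le_Pdelta) (auto simp: fine_packing_def intro: packing_subset)
  show "Pdelta d \<Delta> g \<delta> E
      \<le> (SUP \<pi> \<in> {\<pi>. packing d \<pi> \<and> fst ` \<pi> \<subseteq> E \<and> snd ` \<pi> \<subseteq> \<Delta> \<and> (\<forall>p\<in>\<pi>. snd p \<le> \<delta>)}. gsum g \<pi>)"
  proof (rule Pdelta_leI)
    fix \<pi> assume \<pi>: "fine_packing d \<Delta> \<delta> E \<pi>"
    then have "(\<Sum>p\<in>\<pi>. ennreal (g (snd p))) \<le> gsum g \<pi>"
      unfolding gsum_def fine_packing_def by (intro SUP_upper) auto
    also have "\<dots> \<le> (SUP \<pi> \<in> {\<pi>. packing d \<pi> \<and> fst ` \<pi> \<subseteq> E \<and> snd ` \<pi> \<subseteq> \<Delta> \<and> (\<forall>p\<in>\<pi>. snd p \<le> \<delta>)}. gsum g \<pi>)"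
      using \<pi> unfolding fine_packing_def by (intro SUP_upper) auto
    finally show "(\<Sum>p\<in>\<pi>. ennreal (g (snd p))) \<le> \<dots>" .
  qed
qed

lemma P0_le_Pdelta: "\<delta> > 0 \<Longrightarrow> P0 d \<Delta> g E \<le> Pdelta d \<Delta> g \<delta> E"
  unfolding P0_eq_INF_Pdelta by (rule INF_lower) simp

lemma P0_empty [simp]: "P0 d \<Delta> g {} = 0"
proof -
  have "Pdelta d \<Delta> g 1 {} = 0"
    unfolding Pdelta_def fine_packing_def by (auto intro!: antisym SUP_least)
  then show ?thesis
    using P0_le_Pdelta[of 1 d \<Delta> g "{}"] by simp
qed

lemma Pmeas_le_P0: "Pmeas d \<Delta> g A \<le> P0 d \<Delta> g A"
proof -
  let ?Es = "\<lambda>n::nat. if n = 0 then A else {}"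
  have "(\<Sum>n. P0 d \<Delta> g (?Es n)) = (\<Sum>n<1. P0 d \<Delta> g (?Es n))"
    by (rule suminf_finite) auto
  then have "(\<Sum>n. P0 d \<Delta> g (?Es n)) = P0 d \<Delta> g A"
    by simp
  moreover have "A \<subseteq> (\<Union>n. ?Es n)"
    by (auto intro!: exI[of _ 0])
  ultimately show ?thesis
    unfolding Pmeas_def by (intro INF_lower2[where i="?Es"]) auto
qed

lemma Pmeas_mono: "A \<subseteq> B \<Longrightarrow> Pmeas d \<Delta> g A \<le> Pmeas d \<Delta> g B"
  unfolding Pmeas_def by (rule INF_superset_mono) auto

text \<open>Moving each centre of a finite packing by less than half the smallest slack
  \<open>d(x\<^sub>i, x\<^sub>j) - r\<^sub>i\<close> keeps it a packing.\<close>
lemma finite_packing_perturb: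
  fixes \<pi> :: "('a::metric_space \<times> real) set"
  assumes fin: "finite \<pi>" and pk: "packing dist \<pi>" and cl: "fst ` \<pi> \<subseteq> closure A"
  obtains a where "\<And>p. p \<in> \<pi> \<Longrightarrow> a p \<in> A" "inj_on (\<lambda>p. (a p, snd p)) \<pi>"
    "packing dist ((\<lambda>p. (a p, snd p)) ` \<pi>)"
proof -
  define slacks where "slacks = {dist (fst p) (fst q) - snd p |p q. p \<in> \<pi> \<and> q \<in> \<pi> \<and> p \<noteq> q}"
  define \<eta> where "\<eta> = Min (insert 1 slacks)"
  have "slacks \<subseteq> {dist (fst p) (fst q) - snd p |p q. p \<in> \<pi> \<and> q \<in> \<pi>}"
    unfolding slacks_def by blast
  then have "finite slacks"
    by (rule finite_subset)
      (use fin finite_image_set2[of "\<lambda>p. p \<in> \<pi>" "\<lambda>q. q \<in> \<pi>" "\<lambda>p q. dist (fst p) (fst q) - snd p"] in simp)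
  moreover have "s > 0" if s: "s \<in> slacks" for s
  proof -
    obtain p q where "s = dist (fst p) (fst q) - snd p" "p \<in> \<pi>" "q \<in> \<pi>" "p \<noteq> q"
      using s unfolding slacks_def by blast
    with pk show ?thesis
      unfolding packing_def by simp
  qed
  ultimately have \<eta>_pos: "\<eta> > 0"
    unfolding \<eta>_def by (subst Min_gr_iff) auto
  have \<eta>_le: "\<eta> \<le> dist (fst p) (fst q) - snd p" if "p \<in> \<pi>" "q \<in> \<pi>" "p \<noteq> q" for p q
  proof -
    have "dist (fst p) (fst q) - snd p \<in> slacks"
      unfolding slacks_def using that by blast
    with \<open>finite slacks\<close> show ?thesis
      unfolding \<eta>_def by (intro Min_le) auto
  qed
  have "\<exists>y\<in>A. dist (fst p) y < \<eta> / 2" if "p \<in> \<pi>" for p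
    using cl that \<eta>_pos by (intro closure_approachableD) auto
  then obtain a where a: "\<And>p. p \<in> \<pi> \<Longrightarrow> a p \<in> A" "\<And>p. p \<in> \<pi> \<Longrightarrow> dist (fst p) (a p) < \<eta> / 2"
    by metis
  have far: "dist (a p) (a q) > snd p" if "p \<in> \<pi>" "q \<in> \<pi>" "p \<noteq> q" for p q
  proof -
    have "dist (fst p) (fst q) \<le> dist (fst p) (a p) + dist (a p) (a q) + dist (a q) (fst q)"
      by (metis add.commute dist_triangle order_trans add_right_mono)
    moreover have "dist (a q) (fst q) < \<eta> / 2"
      using a(2)[OF that(2)] by (simp add: dist_commute)
    ultimately show ?thesis
      using a(2)[OF that(1)] \<eta>_le[OF that] by linarith
  qed
  have pos: "snd p > 0" if "p \<in> \<pi>" for p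
    using pk that unfolding packing_def by blast
  have "inj_on (\<lambda>p. (a p, snd p)) \<pi>"
  proof (rule inj_onI)
    fix p q assume "p \<in> \<pi>" "q \<in> \<pi>" "(a p, snd p) = (a q, snd q)"
    then show "p = q"
      using far[of p q] pos[of p] by fastforce
  qed
  moreover have "packing dist ((\<lambda>p. (a p, snd p)) ` \<pi>)"
    unfolding packing_def using far pos by auto
  ultimately show ?thesis
    using a(1) that by blast
qed

section \<open>Borel hulls\<close>

lemma Pdelta_closure:
  fixes A :: "'a::metric_space set"
  shows "Pdelta dist \<Delta> g \<delta> (closure A) = Pdelta dist \<Delta> g \<delta> A"
proof (rule antisym)
  show "Pdelta dist \<Delta> g \<delta> (closure A) \<le> Pdelta dist \<Delta> g \<delta> A"
  proof (rule Pdelta_leI)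
    fix \<pi> assume \<pi>: "fine_packing dist \<Delta> \<delta> (closure A) \<pi>"
    then obtain a where a: "\<And>p. p \<in> \<pi> \<Longrightarrow> a p \<in> A" "inj_on (\<lambda>p. (a p, snd p)) \<pi>"
      "packing dist ((\<lambda>p. (a p, snd p)) ` \<pi>)"
      using finite_packing_perturb[of \<pi> A] unfolding fine_packing_def by blast
    have "(\<Sum>p\<in>\<pi>. ennreal (g (snd p))) = (\<Sum>p\<in>(\<lambda>p. (a p, snd p)) ` \<pi>. ennreal (g (snd p)))"
      using a(2) by (simp add: sum.reindex)
    also have "\<dots> \<le> Pdelta dist \<Delta> g \<delta> A"
      using \<pi> a by (intro sum_le_Pdelta) (auto simp: fine_packing_def)
    finally show "(\<Sum>p\<in>\<pi>. ennreal (g (snd p))) \<le> Pdelta dist \<Delta> g \<delta> A" .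
  qed
  show "Pdelta dist \<Delta> g \<delta> A \<le> Pdelta dist \<Delta> g \<delta> (closure A)"
    by (intro Pdelta_leI sum_le_Pdelta fine_packing_mono[OF _ order_refl closure_subset])
qed

lemma P0_closure:
  fixes A :: "'a::metric_space set"
  shows "P0 dist \<Delta> g (closure A) = P0 dist \<Delta> g A"
  unfolding P0_eq_INF_Pdelta Pdelta_closure ..

text \<open>Closures do not increase \<open>P0\<close>, so covers by closed sets suffice in the definition
  of \<open>Pmeas\<close>.\<close>
lemma Pmeas_borel_hull_approx:
  fixes A :: "'a::metric_space set"
  assumes "e > 0"
  shows "\<exists>H \<in> sets borel. A \<subseteq> H \<and> Pmeas dist \<Delta> g H \<le> Pmeas dist \<Delta> g A + ennreal e"
proof (cases "Pmeas dist \<Delta> g A = \<infinity>")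
  case True
  then show ?thesis
    by (intro bexI[of _ UNIV]) auto
next
  case False
  then have "Pmeas dist \<Delta> g A < Pmeas dist \<Delta> g A + ennreal e"
    using assms by (simp add: ennreal_less_top order_less_le)
  then obtain Es where Es: "A \<subseteq> (\<Union>n. Es n)"
    "(\<Sum>n. P0 dist \<Delta> g (Es n)) < Pmeas dist \<Delta> g A + ennreal e"
    unfolding Pmeas_def[of _ _ _ A] by (auto simp: INF_less_iff)
  have "Pmeas dist \<Delta> g (\<Union>n. closure (Es n)) \<le> (\<Sum>n. P0 dist \<Delta> g (closure (Es n)))"
    unfolding Pmeas_def by (rule INF_lower2[where i="\<lambda>n. closure (Es n)"]) auto
  with Es(2) have "Pmeas dist \<Delta> g (\<Union>n. closure (Es n)) \<le> Pmeas dist \<Delta> g A + ennreal e"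
    by (simp add: P0_closure)
  moreover have "(\<Union>n. closure (Es n)) \<in> sets borel"
    by (intro sets.countable_UN borel_closed) auto
  moreover have "A \<subseteq> (\<Union>n. closure (Es n))"
    using Es(1) closure_subset by blast
  ultimately show ?thesis
    by blast
qed

lemma Pmeas_borel_hull:
  fixes A :: "'a::metric_space set"
  obtains H where "H \<in> sets borel" "A \<subseteq> H" "Pmeas dist \<Delta> g H = Pmeas dist \<Delta> g A"
proof -
  have "\<forall>j::nat. \<exists>H \<in> sets borel. A \<subseteq> H \<and> Pmeas dist \<Delta> g H \<le> Pmeas dist \<Delta> g A + ennreal (1 / Suc j)"
    by (intro allI Pmeas_borel_hull_approx) simp
  then obtain Hs where Hs: "\<And>j. Hs j \<in> sets borel" "\<And>j. A \<subseteq> Hs j"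
    "\<And>j. Pmeas dist \<Delta> g (Hs j) \<le> Pmeas dist \<Delta> g A + ennreal (1 / Suc j)"
    by metis
  have "Pmeas dist \<Delta> g (\<Inter>j. Hs j) \<le> Pmeas dist \<Delta> g A"
  proof (rule ennreal_le_epsilon)
    fix e :: real assume "0 < e"
    then obtain j :: nat where j: "1 / Suc j < e"
      by (metis nat_approx_posE of_nat_Suc)
    have "Pmeas dist \<Delta> g (\<Inter>j. Hs j) \<le> Pmeas dist \<Delta> g (Hs j)"
      by (intro Pmeas_mono) auto
    also have "\<dots> \<le> Pmeas dist \<Delta> g A + ennreal e"
      using Hs(3)[of j] j by (simp add: add_left_mono ennreal_leI order_trans)
    finally show "Pmeas dist \<Delta> g (\<Inter>j. Hs j) \<le> Pmeas dist \<Delta> g A + ennreal e" .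
  qed
  moreover have "A \<subseteq> (\<Inter>j. Hs j)"
    using Hs(2) by blast
  moreover from this have "Pmeas dist \<Delta> g A \<le> Pmeas dist \<Delta> g (\<Inter>j. Hs j)"
    by (rule Pmeas_mono)
  moreover have "(\<Inter>j. Hs j) \<in> sets borel"
    using Hs(1) by blast
  ultimately show ?thesis
    using that by (simp add: antisym)
qed

section \<open>Closed inner regularity of finite Borel measures\<close>

definition closed_open_regular :: "'a::topological_space measure \<Rightarrow> 'a set \<Rightarrow> bool"
  where "closed_open_regular M B \<longleftrightarrow>
    (\<forall>e>0. \<exists>F U. closed F \<and> open U \<and> F \<subseteq> B \<and> B \<subseteq> U \<and> emeasure M (U - F) < ennreal e)"

lemma (in finite_measure) decseq_emeasure_small:
  assumes "range X \<subseteq> sets M" "decseq X" "(\<Inter>n. X n) = {}" "e > 0"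
  obtains n where "emeasure M (X n) < ennreal e"
proof -
  have "(\<lambda>n. emeasure M (X n)) \<longlonglongrightarrow> 0"
    using Lim_emeasure_decseq[of X M] assms by simp
  then have "\<forall>\<^sub>F n in sequentially. emeasure M (X n) < ennreal e"
    using assms(4) by (intro order_tendstoD(2)) auto
  then show ?thesis
    using that by (meson eventually_happens' sequentially_bot)
qed

text \<open>Open sets of a metric space are increasing unions of closed sets.\<close>
lemma closed_open_regular_open:
  fixes M :: "'a::metric_space measure"
  assumes "finite_measure M" "sets M = sets borel" "open S"
  shows "closed_open_regular M S"
  unfolding closed_open_regular_def
proof (intro allI impI)
  fix e :: real assume "e > 0"
  obtain C where C: "\<And>n. closed (C n)" "\<And>n. C n \<subseteq> C (Suc n)" "(\<Union>n. C n) = S"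
    using open_imp_fsigma_in[OF metrizable_space_euclidean, of S] assms(3)
    unfolding fsigma_in_ascending by auto
  have "decseq (\<lambda>n. S - C n)"
    using C(2) by (intro decseq_SucI) blast
  moreover have "range (\<lambda>n. S - C n) \<subseteq> sets M"
    using C(1) assms by auto
  moreover have "(\<Inter>n. S - C n) = {}"
    using C(3) by blast
  ultimately obtain n where "emeasure M (S - C n) < ennreal e"
    using finite_measure.decseq_emeasure_small[OF assms(1), of "\<lambda>n. S - C n" e] \<open>e > 0\<close> by blast
  moreover have "C n \<subseteq> S"
    using C(3) by blast
  ultimately show "\<exists>F U. closed F \<and> open U \<and> F \<subseteq> S \<and> S \<subseteq> U \<and> emeasure M (U - F) < ennreal e"
    using C(1) assms(3) by blast
qed

lemma closed_open_regular_Compl: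
  assumes "closed_open_regular M B"
  shows "closed_open_regular M (- B)"
  unfolding closed_open_regular_def
proof (intro allI impI)
  fix e :: real assume "e > 0"
  with assms obtain F U where FU: "closed F" "open U" "F \<subseteq> B" "B \<subseteq> U" "emeasure M (U - F) < ennreal e"
    unfolding closed_open_regular_def by meson
  have "- F - - U = U - F"
    by blast
  with FU(5) have "emeasure M (- F - - U) < ennreal e"
    by (simp only:)
  moreover have "closed (- U)" "open (- F)" "- U \<subseteq> - B" "- B \<subseteq> - F"
    using FU by auto
  ultimately show "\<exists>F' U'. closed F' \<and> open U' \<and> F' \<subseteq> - B \<and> - B \<subseteq> U' \<and> emeasure M (U' - F') < ennreal e"
    by (intro exI[of _ "- U"] exI[of _ "- F"] conjI)
qed

text \<open>For a countable union, approximate the \<open>i\<close>-th set up to \<open>e/2\<^sup>i\<^sup>+\<^sup>2\<close> and keep only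
  finitely many of the closed sets, so that their union stays closed.\<close>
lemma closed_open_regular_UN:
  assumes "finite_measure M" "sets M = sets borel" "\<And>i::nat. closed_open_regular M (A i)"
  shows "closed_open_regular M (\<Union>i. A i)"
  unfolding closed_open_regular_def
proof (intro allI impI)
  interpret finite_measure M by (fact assms(1))
  fix e :: real assume e: "e > 0"
  have "\<forall>i. \<exists>F U. closed F \<and> open U \<and> F \<subseteq> A i \<and> A i \<subseteq> U \<and> emeasure M (U - F) < ennreal (e / 2 ^ Suc (Suc i))"
    using assms(3) e unfolding closed_open_regular_def by simp
  then obtain F U where FU: "\<And>i. closed (F i)" "\<And>i. open (U i)" "\<And>i. F i \<subseteq> A i" "\<And>i. A i \<subseteq> U i"
    "\<And>i. emeasure M (U i - F i) < ennreal (e / 2 ^ Suc (Suc i))"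
    by metis
  have meas: "F i \<in> sets M" "U i \<in> sets M" for i
    using FU(1,2) assms(2) by auto
  obtain n where n: "emeasure M ((\<Union>i. F i) - (\<Union>i<n. F i)) < ennreal (e / 2)"
  proof (rule decseq_emeasure_small[where e="e / 2"])
    show "range (\<lambda>n. (\<Union>i. F i) - (\<Union>i<n. F i)) \<subseteq> sets M"
      using meas by auto
    show "decseq (\<lambda>n. (\<Union>i. F i) - (\<Union>i<n. F i))"
      by (rule decseq_SucI) auto
    show "(\<Inter>n. (\<Union>i. F i) - (\<Union>i<n. F i)) = {}"
      by (auto intro: lessI)
  qed (use e in auto)
  have "(\<lambda>i. e / 2 ^ Suc (Suc i)) sums (e / 2)"
    using sums_mult[OF geometric_sums[of "1/2"], of "e / 4"]
    by (simp add: power_divide field_simps)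
  then have "(\<Sum>i. ennreal (e / 2 ^ Suc (Suc i))) = ennreal (e / 2)"
    using e by (subst suminf_ennreal2) (auto simp: sums_iff)
  moreover have "emeasure M (\<Union>i. U i - F i) \<le> (\<Sum>i. ennreal (e / 2 ^ Suc (Suc i)))"
    using meas FU(5)
    by (intro order_trans[OF emeasure_subadditive_countably suminf_le]) (auto intro: less_imp_le)
  ultimately have "emeasure M (\<Union>i. U i - F i) \<le> ennreal (e / 2)"
    by simp
  moreover have "emeasure M ((\<Union>i. U i) - (\<Union>i<n. F i))
      \<le> emeasure M (\<Union>i. U i - F i) + emeasure M ((\<Union>i. F i) - (\<Union>i<n. F i))"
    using meas by (intro order_trans[OF emeasure_mono emeasure_subadditive]) auto
  moreover have "ennreal (e / 2) + emeasure M ((\<Union>i. F i) - (\<Union>i<n. F i)) < ennreal (e / 2) + ennreal (e / 2)"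
    using n by (simp add: ennreal_add_left_cancel_less)
  ultimately have "emeasure M ((\<Union>i. U i) - (\<Union>i<n. F i)) < ennreal (e / 2) + ennreal (e / 2)"
    by (meson add_right_mono le_less_trans order_trans)
  then have "emeasure M ((\<Union>i. U i) - (\<Union>i<n. F i)) < ennreal e"
    using e by (simp flip: ennreal_plus)
  moreover have "closed (\<Union>i<n. F i)" "open (\<Union>i. U i)"
    using FU(1,2) by auto
  moreover have "(\<Union>i<n. F i) \<subseteq> (\<Union>i. A i)" "(\<Union>i. A i) \<subseteq> (\<Union>i. U i)"
    using FU(3,4) by blast+
  ultimately show "\<exists>F U. closed F \<and> open U \<and> F \<subseteq> (\<Union>i. A i) \<and> (\<Union>i. A i) \<subseteq> U
      \<and> emeasure M (U - F) < ennreal e"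
    by (intro exI[of _ "\<Union>i<n. F i"] exI[of _ "\<Union>i. U i"] conjI)
qed

lemma finite_measure_closed_open_regular:
  fixes M :: "'a::metric_space measure"
  assumes "finite_measure M" "sets M = sets borel" "B \<in> sets borel"
  shows "closed_open_regular M B"
  using assms(3) unfolding sets_borel
proof (induction rule: sigma_sets.induct)
  case (Basic S)
  then show ?case
    using closed_open_regular_open assms(1,2) by blast
next
  case Empty
  then show ?case
    using closed_open_regular_open assms(1,2) by blast
next
  case (Compl B)
  then show ?case
    using closed_open_regular_Compl by (simp add: Compl_eq_Diff_UNIV)
next
  case (Union A)
  then show ?case
    using closed_open_regular_UN assms(1,2) by blast
qed

lemma emeasure_closed_inner_approx:
  fixes M :: "'a::metric_space measure"
  assumes "sets M = sets borel" "D \<in> sets borel" "emeasure M D < \<infinity>" "e > 0"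
  obtains K where "closed K" "K \<subseteq> D" "emeasure M (D - K) < ennreal e"
proof -
  let ?N = "density M (indicator D)"
  have "D \<in> sets M" "space M \<in> sets M"
    using assms(1,2) by auto
  then have "emeasure ?N (space ?N) = emeasure M (D \<inter> space M)"
    by (simp add: emeasure_restricted)
  also have "\<dots> \<le> emeasure M D"
    using \<open>D \<in> sets M\<close> by (intro emeasure_mono) auto
  finally have "finite_measure ?N"
    using assms(3) by (intro finite_measureI) (auto simp: top_unique)
  moreover have "sets ?N = sets borel"
    using assms(1) by simp
  ultimately obtain F U where "closed F" "open U" "F \<subseteq> D" "D \<subseteq> U" "emeasure ?N (U - F) < ennreal e"
    using finite_measure_closed_open_regular[of ?N D] assms unfolding closed_open_regular_def by blast
  moreover from this have "emeasure ?N (U - F) = emeasure M (D - F)"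
    using assms by (subst emeasure_restricted) (auto intro!: arg_cong[where f="emeasure M"])
  ultimately show ?thesis
    using that by auto
qed

section \<open>Geometric layer cake\<close>

lemma sum_int_telescope:
  fixes f :: "int \<Rightarrow> 'a::ab_group_add"
  assumes "m \<le> k"
  shows "(\<Sum>l\<in>{m..k}. f l - f (l - 1)) = f k - f (m - 1)"
  using assms
proof (induction k rule: int_ge_induct)
  case (step k)
  have "{m..k + 1} = insert (k + 1) {m..k}"
    using step.hyps by auto
  then show ?case
    using step.IH by simp
qed simp

lemma powr_int_less_eventually:
  fixes \<rho> :: real
  assumes "\<rho> > 1" "\<epsilon> > 0"
  obtains N :: nat where "\<rho> powr (- int N) < \<epsilon>"
proof -
  obtain N where N: "1 / \<epsilon> < \<rho> ^ N"
    using real_arch_pow[OF assms(1)] by blast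
  have "\<rho> powr (- int N) = 1 / \<rho> ^ N"
    using assms(1) by (simp add: powr_minus powr_realpow divide_inverse)
  also have "\<dots> < \<epsilon>"
    using N assms by (simp add: field_simps)
  finally show ?thesis
    using that by blast
qed

lemma powr_int_bracket:
  fixes \<rho> y :: real
  assumes "\<rho> > 1" "y > 0"
  obtains k :: int where "\<rho> powr k < y" "y \<le> \<rho> powr (k + 1)"
proof -
  define k where "k = \<lceil>log \<rho> y\<rceil> - 1"
  have "y = \<rho> powr (log \<rho> y)"
    using assms by simp
  also have "\<dots> \<le> \<rho> powr (k + 1)"
    using assms(1) unfolding k_def by (intro powr_mono) auto
  finally have "y \<le> \<rho> powr (k + 1)" .
  moreover have "\<rho> powr k < \<rho> powr (log \<rho> y)"
    using assms(1) unfolding k_def by (subst powr_less_cancel_iff) linarith+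
  ultimately show ?thesis
    using that assms by simp
qed

lemma geometric_layers_ge:
  fixes \<rho> :: real and k :: int and H :: "int \<Rightarrow> 'a set"
  assumes \<rho>: "\<rho> > 1" and H: "\<And>l. l \<le> k \<Longrightarrow> x \<in> H l"
  shows "ennreal (\<rho> powr k)
    \<le> (SUP N. \<Sum>l\<in>{- int N..int N}. ennreal (\<rho> powr l - \<rho> powr (l - 1)) * indicator (H l) x)"
    (is "_ \<le> (SUP N. ?\<psi> N)")
proof (rule ennreal_le_epsilon)
  fix \<epsilon> :: real assume "\<epsilon> > 0"
  then obtain N0 where N0: "\<rho> powr (- int N0) < \<epsilon>"
    using powr_int_less_eventually[OF \<rho>] by blast
  define N where "N = max N0 (nat \<bar>k\<bar>)"
  have Nk: "- int N \<le> k" "k \<le> int N"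
    unfolding N_def by auto
  have "\<rho> powr (- int N - 1) \<le> \<rho> powr (- int N0)"
    using \<rho> unfolding N_def by (intro powr_mono) auto
  then have small: "\<rho> powr (- int N - 1) < \<epsilon>"
    using N0 by linarith
  have w_pos: "\<rho> powr (l - 1) \<le> \<rho> powr l" for l :: int
    using \<rho> by (intro powr_mono) auto
  have "ennreal (\<rho> powr k - \<rho> powr (- int N - 1)) = (\<Sum>l\<in>{- int N..k}. ennreal (\<rho> powr l - \<rho> powr (l - 1)))"
    using sum_int_telescope[OF Nk(1), of "\<lambda>l. \<rho> powr l"] w_pos
    by (simp add: sum_ennreal[symmetric] diff_ge_0_iff_ge)
  also have "\<dots> = (\<Sum>l\<in>{- int N..k}. ennreal (\<rho> powr l - \<rho> powr (l - 1)) * indicator (H l) x)"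
    using H by (intro sum.cong) auto
  also have "\<dots> \<le> ?\<psi> N"
    using Nk by (intro sum_mono2) auto
  also have "\<dots> \<le> (SUP N. ?\<psi> N)"
    by (rule SUP_upper) simp
  finally have "ennreal (\<rho> powr k - \<rho> powr (- int N - 1)) \<le> (SUP N. ?\<psi> N)" .
  moreover have "ennreal (\<rho> powr k) \<le> ennreal (\<rho> powr k - \<rho> powr (- int N - 1)) + ennreal \<epsilon>"
  proof -
    have "\<rho> powr (- int N - 1) \<le> \<rho> powr k"
      using \<rho> Nk by (intro powr_mono) auto
    then have "ennreal (\<rho> powr k - \<rho> powr (- int N - 1)) + ennreal \<epsilon>
        = ennreal (\<rho> powr k - \<rho> powr (- int N - 1) + \<epsilon>)"
      using \<open>\<epsilon> > 0\<close> by (simp add: ennreal_plus)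
    then show ?thesis
      using small by (simp add: ennreal_leI)
  qed
  ultimately show "ennreal (\<rho> powr k) \<le> (SUP N. ?\<psi> N) + ennreal \<epsilon>"
    by (meson add_right_mono order_trans)
qed

lemma ennreal_unbounded_powers:
  fixes \<rho> :: real and S :: ennreal
  assumes \<rho>: "\<rho> > 1" and le: "\<And>n. ennreal (\<rho> ^ n) \<le> S"
  shows "S = \<infinity>"
proof (rule ccontr)
  assume "S \<noteq> \<infinity>"
  then obtain r where r: "S = ennreal r" "r \<ge> 0"
    by (cases S) auto
  obtain n where "r < \<rho> ^ n"
    using real_arch_pow[OF \<rho>] by blast
  with le[of n] r \<rho> show False
    by (simp add: ennreal_le_iff2 not_le[symmetric])
qed

lemma le_geometric_layers:
  fixes \<rho> :: real and y :: ennreal and H :: "int \<Rightarrow> 'a set"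
  assumes \<rho>: "\<rho> > 1" and level: "\<And>k. ennreal (\<rho> powr k) < y \<Longrightarrow> x \<in> H k"
  shows "y \<le> ennreal \<rho> *
    (SUP N. \<Sum>k\<in>{- int N..int N}. ennreal (\<rho> powr k - \<rho> powr (k - 1)) * indicator (H k) x)"
    (is "_ \<le> _ * ?S")
proof -
  have layers: "ennreal (\<rho> powr k) \<le> ?S" if "\<And>l. l \<le> k \<Longrightarrow> ennreal (\<rho> powr l) < y" for k :: int
    using \<rho> level that by (intro geometric_layers_ge) auto
  show ?thesis
  proof (cases y)
    case (real r)
    show ?thesis
    proof (cases "r = 0")
      case False
      with real have "r > 0"
        by simp
      then obtain k :: int where k: "\<rho> powr k < r" "r \<le> \<rho> powr (k + 1)"
        using powr_int_bracket[OF \<rho>] by blast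
      have "ennreal (\<rho> powr l) < y" if "l \<le> k" for l
      proof -
        have "\<rho> powr l \<le> \<rho> powr k"
          using \<rho> that by (intro powr_mono) auto
        with k(1) have "\<rho> powr l < r"
          by linarith
        with \<open>r > 0\<close> real show ?thesis
          by (simp add: ennreal_lessI)
      qed
      then have "ennreal \<rho> * ennreal (\<rho> powr k) \<le> ennreal \<rho> * ?S"
        by (intro mult_left_mono layers) auto
      moreover have "y \<le> ennreal \<rho> * ennreal (\<rho> powr k)"
        using \<rho> k(2) real by (simp add: ennreal_mult'[symmetric] powr_add ennreal_leI mult.commute)
      ultimately show ?thesis
        by simp
    qed (use real in simp)
  next
    case top
    have S_top: "?S = \<infinity>"
    proof (rule ennreal_unbounded_powers[OF \<rho>])
      show "ennreal (\<rho> ^ n) \<le> ?S" for n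
        using top layers[of "int n"] \<rho> by (simp add: powr_realpow)
    qed
    have "ennreal \<rho> * ?S = \<infinity>"
      unfolding S_top using \<rho> by (simp add: ennreal_mult_top)
    then show ?thesis
      by simp
  qed
qed

text \<open>Layer-cake bound for the upper integral along the levels \<open>\<rho>\<^sup>k\<close>, \<open>k \<in> \<int>\<close>; the factor \<open>\<rho>\<close>
  pays for rounding \<open>f\<close> up to the next level.\<close>
lemma upper_integral_le_geometric_layers:
  fixes f :: "'a \<Rightarrow> ennreal" and \<rho> s :: real and H :: "int \<Rightarrow> 'a set"
  assumes \<rho>: "\<rho> > 1" and H: "\<And>k. H k \<in> sets M"
    and level: "\<And>k x. ennreal (\<rho> powr k) < f x \<Longrightarrow> x \<in> H k"
    and bound: "\<And>N. (\<Sum>k\<in>{- int N..int N}. ennreal (\<rho> powr k - \<rho> powr (k - 1)) * emeasure M (H k))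
      \<le> ennreal s"
  shows "upper_integral M f \<le> ennreal (\<rho> * s)"
proof -
  have H_meas [measurable]: "H k \<in> sets M" for k
    by (rule H)
  define \<psi> where "\<psi> N x = (\<Sum>k\<in>{- int N..int N}. ennreal (\<rho> powr k - \<rho> powr (k - 1)) * indicator (H k) x)"
    for N x
  have \<psi>_meas [measurable]: "\<psi> N \<in> borel_measurable M" for N
    unfolding \<psi>_def by measurable
  have integral_\<psi>: "(\<integral>\<^sup>+x. \<psi> N x \<partial>M)
      = (\<Sum>k\<in>{- int N..int N}. ennreal (\<rho> powr k - \<rho> powr (k - 1)) * emeasure M (H k))" for N
  proof -
    have "(\<integral>\<^sup>+x. \<psi> N x \<partial>M)
        = (\<Sum>k\<in>{- int N..int N}. \<integral>\<^sup>+x. ennreal (\<rho> powr k - \<rho> powr (k - 1)) * indicator (H k) x \<partial>M)"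
      unfolding \<psi>_def by (rule nn_integral_sum) measurable
    then show ?thesis
      by (simp only: nn_integral_cmult_indicator H)
  qed
  have "incseq \<psi>"
    unfolding \<psi>_def by (intro incseq_SucI le_funI sum_mono2) auto
  then have "(\<integral>\<^sup>+x. (SUP N. \<psi> N x) \<partial>M) = (SUP N. \<integral>\<^sup>+x. \<psi> N x \<partial>M)"
    by (intro nn_integral_monotone_convergence_SUP) measurable
  also have "\<dots> \<le> ennreal s"
    using bound by (intro SUP_least) (simp only: integral_\<psi>)
  finally have "(\<integral>\<^sup>+x. ennreal \<rho> * (SUP N. \<psi> N x) \<partial>M) \<le> ennreal \<rho> * ennreal s"
    by (subst nn_integral_cmult) (auto intro: mult_left_mono)
  moreover have "f x \<le> ennreal \<rho> * (SUP N. \<psi> N x)" for x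
    unfolding \<psi>_def using \<rho> level by (rule le_geometric_layers)
  then have "upper_integral M f \<le> (\<integral>\<^sup>+x. ennreal \<rho> * (SUP N. \<psi> N x) \<partial>M)"
    unfolding upper_integral_def by (intro INF_lower) auto
  ultimately show ?thesis
    using \<rho> by (simp add: ennreal_mult')
qed

section \<open>Lifting packings to products\<close>

lemma gap_mono: "F' \<subseteq> F \<Longrightarrow> gap d F \<le> gap d F'"
  unfolding gap_def by (rule INF_superset_mono) auto

lemma gap_le: "x \<in> F \<Longrightarrow> y \<in> F \<Longrightarrow> x \<noteq> y \<Longrightarrow> gap d F \<le> ennreal (d x y)"
  unfolding gap_def by (rule INF_lower2[where i="(x, y)"]) auto

text \<open>An infinite separated set contains finite separated subsets of every size.\<close>
lemma Cdelta_witness: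
  assumes G: "G > 0" and t: "t \<ge> 0" and less: "t = 0 \<or> ennreal t < Cdelta d r S * ennreal G"
  shows "\<exists>F. finite F \<and> F \<subseteq> S \<and> gap d F > ennreal r \<and> t \<le> real (card F) * G"
proof (cases "t = 0")
  case True
  then show ?thesis
    by (intro exI[of _ "{}"]) (simp add: gap_def)
next
  case False
  have "Cdelta d r S * ennreal G = (SUP F\<in>{F. F \<subseteq> S \<and> gap d F > ennreal r}. ecard F * ennreal G)"
    unfolding Cdelta_def by (rule SUP_mult_right_ennreal)
  with False less obtain F where F: "F \<subseteq> S" "gap d F > ennreal r" "ennreal t < ecard F * ennreal G"
    by (auto simp: less_SUP_iff)
  show ?thesis
  proof (cases "finite F")
    case True
    then have "ennreal t < ennreal (real (card F) * G)"
      using F(3) G by (simp add: ecard_def ennreal_of_nat_eq_real_of_nat ennreal_mult)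
    then have "t < real (card F) * G"
      using t by (simp add: ennreal_less_iff)
    with True F show ?thesis
      by auto
  next
    case False
    then obtain F' where F': "finite F'" "card F' = nat \<lceil>t / G\<rceil>" "F' \<subseteq> F"
      using infinite_arbitrarily_large by blast
    have "t / G \<le> real (card F')"
      unfolding F'(2) by linarith
    then have "t \<le> real (card F') * G"
      using G by (simp add: field_simps)
    moreover have "gap d F' > ennreal r"
      using gap_mono[OF F'(3), of d] F(2) by simp
    ultimately show ?thesis
      using F' F(1) by blast
  qed
qed

definition lift_packing :: "('a \<times> real) set \<Rightarrow> ('a \<times> real \<Rightarrow> 'b set) \<Rightarrow> (('a \<times> 'b) \<times> real) set"
  where "lift_packing \<pi> F = (\<Union>p\<in>\<pi>. (\<lambda>y. ((fst p, y), snd p)) ` F p)"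

text \<open>Above each ball \<open>(x, r)\<close> of a packing of \<open>X\<close>, put balls of radius \<open>r\<close> centred at an
  \<open>r\<close>-separated set of points of \<open>Y\<close>: for the maximum metric this is a packing of \<open>X \<times> Y\<close>.\<close>
lemma packing_lift_packing:
  fixes \<pi> :: "('a::metric_space \<times> real) set" and F :: "'a \<times> real \<Rightarrow> 'b::metric_space set"
  assumes \<pi>: "packing dist \<pi>" and F: "\<And>p. p \<in> \<pi> \<Longrightarrow> gap dist (F p) > ennreal (snd p)"
  shows "packing dmax (lift_packing \<pi> F)"
  unfolding packing_def
proof (intro conjI ballI impI)
  fix a assume "a \<in> lift_packing \<pi> F"
  with \<pi> show "snd a > 0"
    unfolding lift_packing_def packing_def by auto
next
  fix a b assume "a \<in> lift_packing \<pi> F" "b \<in> lift_packing \<pi> F" "a \<noteq> b"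
  then obtain p y q z where pq: "p \<in> \<pi>" "y \<in> F p" "a = ((fst p, y), snd p)"
    "q \<in> \<pi>" "z \<in> F q" "b = ((fst q, z), snd q)"
    unfolding lift_packing_def by blast
  show "dmax (fst a) (fst b) > snd a"
  proof (cases "p = q")
    case True
    with pq \<open>a \<noteq> b\<close> have "gap dist (F p) \<le> ennreal (dist y z)"
      by (intro gap_le) auto
    with F[OF pq(1)] have "ennreal (snd p) < ennreal (dist y z)"
      by (rule less_le_trans)
    moreover have "snd p > 0"
      using \<pi> pq(1) unfolding packing_def by blast
    ultimately have "snd p < dist y z"
      by (simp add: ennreal_less_iff)
    with pq True show ?thesis
      unfolding dmax_def by simp
  next
    case False
    with pq \<pi> have "snd p < dist (fst p) (fst q)"
      unfolding packing_def by blast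
    with pq show ?thesis
      unfolding dmax_def by simp
  qed
qed

lemma sum_lift_packing:
  fixes f :: "real \<Rightarrow> 'c::comm_semiring_1"
  assumes "finite \<pi>" "\<And>p. p \<in> \<pi> \<Longrightarrow> finite (F p)"
  shows "(\<Sum>a\<in>lift_packing \<pi> F. f (snd a)) = (\<Sum>p\<in>\<pi>. of_nat (card (F p)) * f (snd p))"
proof -
  have "(\<Sum>a\<in>lift_packing \<pi> F. f (snd a)) = (\<Sum>p\<in>\<pi>. \<Sum>a\<in>(\<lambda>y. ((fst p, y), snd p)) ` F p. f (snd a))"
    unfolding lift_packing_def using assms
    by (intro sum.UNION_disjoint) (auto simp: prod_eq_iff)
  also have "\<dots> = (\<Sum>p\<in>\<pi>. of_nat (card (F p)) * f (snd p))"
    by (intro sum.cong refl) (simp add: sum.reindex inj_on_def)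
  finally show ?thesis .
qed

lemma weighted_Pdelta_le_product:
  fixes E :: "('a::metric_space \<times> 'b::metric_space) set"
  assumes g_pos: "\<And>t. t > 0 \<Longrightarrow> g t > 0" and h_pos: "\<And>t. t > 0 \<Longrightarrow> h t > 0"
    and u_nonneg: "\<And>x. u x \<ge> 0"
    and u_level: "\<And>x r. 0 < r \<Longrightarrow> r \<le> \<delta> \<Longrightarrow>
      u x = 0 \<or> ennreal (u x) < Cdelta dist r (xsection E x) * ennreal (g r)"
  shows "weighted_Pdelta dist \<Delta> h u \<delta> \<le> Pdelta dmax \<Delta> (\<lambda>t. g t * h t) \<delta> E"
  unfolding weighted_Pdelta_def
proof (rule SUP_least)
  fix \<pi> :: "('a \<times> real) set" assume "\<pi> \<in> Collect (fine_packing dist \<Delta> \<delta> UNIV)"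
  then have \<pi>: "fine_packing dist \<Delta> \<delta> UNIV \<pi>"
    by simp
  have "\<exists>F. finite F \<and> F \<subseteq> xsection E (fst p) \<and> gap dist F > ennreal (snd p)
      \<and> u (fst p) \<le> real (card F) * g (snd p)" if p: "p \<in> \<pi>" for p
  proof -
    have "0 < snd p" "snd p \<le> \<delta>"
      using \<pi> p fine_packing_pos[OF \<pi> p] unfolding fine_packing_def by auto
    then show ?thesis
      by (intro Cdelta_witness g_pos u_nonneg u_level)
  qed
  then obtain F where F: "\<And>p. p \<in> \<pi> \<Longrightarrow> finite (F p)" "\<And>p. p \<in> \<pi> \<Longrightarrow> F p \<subseteq> xsection E (fst p)"
    "\<And>p. p \<in> \<pi> \<Longrightarrow> gap dist (F p) > ennreal (snd p)"
    "\<And>p. p \<in> \<pi> \<Longrightarrow> u (fst p) \<le> real (card (F p)) * g (snd p)"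
    by metis
  have "packing dmax (lift_packing \<pi> F)"
    using \<pi> F(3) unfolding fine_packing_def by (intro packing_lift_packing) auto
  moreover have "finite (lift_packing \<pi> F)"
    using \<pi> F(1) unfolding fine_packing_def lift_packing_def by auto
  moreover have "fst ` lift_packing \<pi> F \<subseteq> E"
    using F(2) unfolding lift_packing_def xsection_def by fastforce
  moreover have "snd ` lift_packing \<pi> F \<subseteq> \<Delta>" "\<forall>a\<in>lift_packing \<pi> F. snd a \<le> \<delta>"
    using \<pi> unfolding fine_packing_def lift_packing_def by auto
  ultimately have "fine_packing dmax \<Delta> \<delta> E (lift_packing \<pi> F)"
    unfolding fine_packing_def by blast
  then have lift_le: "(\<Sum>a\<in>lift_packing \<pi> F. ennreal (g (snd a) * h (snd a)))
      \<le> Pdelta dmax \<Delta> (\<lambda>t. g t * h t) \<delta> E"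
    using sum_le_Pdelta[of dmax \<Delta> \<delta> E _ "\<lambda>t. g t * h t"] by simp
  have "ennreal (u (fst p) * h (snd p)) \<le> of_nat (card (F p)) * ennreal (g (snd p) * h (snd p))"
    if p: "p \<in> \<pi>" for p
    using F(4)[OF p] g_pos h_pos fine_packing_pos[OF \<pi> p]
    by (simp add: ennreal_of_nat_eq_real_of_nat ennreal_mult'[symmetric] ennreal_leI mult_right_mono
        mult.assoc[symmetric])
  then have "(\<Sum>p\<in>\<pi>. ennreal (u (fst p) * h (snd p)))
      \<le> (\<Sum>p\<in>\<pi>. of_nat (card (F p)) * ennreal (g (snd p) * h (snd p)))"
    by (rule sum_mono)
  also have "\<dots> = (\<Sum>a\<in>lift_packing \<pi> F. ennreal (g (snd a) * h (snd a)))"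
    using \<pi> F(1) unfolding fine_packing_def by (intro sum_lift_packing[symmetric]) auto
  also note lift_le
  finally show "(\<Sum>p\<in>\<pi>. ennreal (u (fst p) * h (snd p))) \<le> Pdelta dmax \<Delta> (\<lambda>t. g t * h t) \<delta> E" .
qed

definition section_level :: "(real \<Rightarrow> real) \<Rightarrow> ('a \<times> 'b::metric_space) set \<Rightarrow> real \<Rightarrow> nat \<Rightarrow> 'a set"
  where "section_level g E t n =
    {x. \<forall>\<delta>. 0 < \<delta> \<and> \<delta> < 1 / Suc n \<longrightarrow> ennreal t < Cdelta dist \<delta> (xsection E x) * ennreal (g \<delta>)}"

lemma section_level_antimono: "t' \<le> t \<Longrightarrow> section_level g E t n \<subseteq> section_level g E t' n"
  unfolding section_level_def by (auto intro: le_less_trans ennreal_leI)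

lemma incseq_section_level: "incseq (section_level g E t)"
proof (rule incseq_SucI)
  fix n
  have "1 / real (Suc (Suc n)) \<le> 1 / real (Suc n)"
    by (intro divide_left_mono) auto
  then show "section_level g E t n \<subseteq> section_level g E t (Suc n)"
    unfolding section_level_def by force
qed

lemma lowerB0_gt_imp_section_level:
  assumes "ennreal t < lowerB0 dist g (xsection E x)"
  obtains n where "x \<in> section_level g E t n"
proof -
  have "\<forall>\<^sub>F \<delta> in at_right 0. ennreal t < Cdelta dist \<delta> (xsection E x) * ennreal (g \<delta>)"
    using assms unfolding lowerB0_def by (rule less_LiminfD)
  then obtain b :: real where "b > 0" "\<And>\<delta>. 0 < \<delta> \<Longrightarrow> \<delta> < b \<Longrightarrow> ennreal t < Cdelta dist \<delta> (xsection E x) * ennreal (g \<delta>)"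
    unfolding eventually_at_right_field by blast
  moreover obtain n :: nat where "1 / real (Suc n) < b"
    using \<open>b > 0\<close> by (metis nat_approx_posE of_nat_Suc)
  ultimately have "x \<in> section_level g E t n"
    unfolding section_level_def by force
  then show ?thesis
    by (rule that)
qed

text \<open>The weight collected at \<open>x\<close> telescopes to at most \<open>F\<^sub>k\<^sub>+\<^sub>1\<close>, where \<open>k\<close> is the last index
  with \<open>x \<in> L (F\<^sub>k\<^sub>+\<^sub>1)\<close>.\<close>
lemma level_of_telescoping_weights:
  fixes F :: "nat \<Rightarrow> real" and L :: "real \<Rightarrow> 'x set"
  assumes L_antimono: "\<And>s t. s \<le> t \<Longrightarrow> L t \<subseteq> L s" and "mono F" "F 0 \<ge> 0"
  shows "(\<Sum>j\<in>{j. j < m \<and> x \<in> L (F (Suc j))}. F (Suc j) - F j) = 0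
    \<or> x \<in> L (\<Sum>j\<in>{j. j < m \<and> x \<in> L (F (Suc j))}. F (Suc j) - F j)" (is "?w = 0 \<or> x \<in> L ?w")
proof (cases "{j. j < m \<and> x \<in> L (F (Suc j))} = {}")
  case False
  define J where "J = {j. j < m \<and> x \<in> L (F (Suc j))}"
  define k where "k = Max J"
  have "finite J" "J \<noteq> {}"
    using False unfolding J_def by simp_all
  then have k: "k \<in> J" "\<And>j. j \<in> J \<Longrightarrow> j \<le> k"
    unfolding k_def by simp_all
  have k_in: "k < m" "x \<in> L (F (Suc k))"
    using k(1) unfolding J_def by auto
  have "J = {..<Suc k}"
  proof
    show "J \<subseteq> {..<Suc k}"
      using k(2) by (auto simp: less_Suc_eq_le)
    show "{..<Suc k} \<subseteq> J"
    proof
      fix j assume "j \<in> {..<Suc k}"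
      then have "j \<le> k"
        by simp
      then have "L (F (Suc k)) \<subseteq> L (F (Suc j))"
        using monoD[OF \<open>mono F\<close>] L_antimono by simp
      with \<open>j \<le> k\<close> k_in show "j \<in> J"
        unfolding J_def by auto
    qed
  qed
  then have "?w = F (Suc k) - F 0"
    unfolding J_def[symmetric] by (simp add: sum_lessThan_telescope)
  then have "L (F (Suc k)) \<subseteq> L ?w"
    using \<open>F 0 \<ge> 0\<close> by (intro L_antimono) simp
  with k_in show ?thesis
    by blast
next
  case True
  then show ?thesis
    by (simp only: sum.empty simp_thms)
qed

lemma packing_UN_separated:
  fixes \<sigma> :: "'i \<Rightarrow> ('a::metric_space \<times> real) set"
  assumes packing: "\<And>i. i \<in> I \<Longrightarrow> packing dist (\<sigma> i)"
    and centres: "\<And>i. i \<in> I \<Longrightarrow> fst ` \<sigma> i \<subseteq> S i"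
    and radii: "\<And>i p. i \<in> I \<Longrightarrow> p \<in> \<sigma> i \<Longrightarrow> snd p \<le> \<eta>"
    and separated: "\<And>i j x y. i \<in> I \<Longrightarrow> j \<in> I \<Longrightarrow> i \<noteq> j \<Longrightarrow> x \<in> S i \<Longrightarrow> y \<in> S j \<Longrightarrow> \<eta> < dist x y"
  shows "packing dist (\<Union>i\<in>I. \<sigma> i)"
  unfolding packing_def
proof (intro conjI ballI impI)
  fix p assume "p \<in> (\<Union>i\<in>I. \<sigma> i)"
  with packing show "snd p > 0"
    unfolding packing_def by blast
next
  fix p q assume "p \<in> (\<Union>i\<in>I. \<sigma> i)" "q \<in> (\<Union>i\<in>I. \<sigma> i)" "p \<noteq> q"
  then obtain i j where ij: "i \<in> I" "j \<in> I" "p \<in> \<sigma> i" "q \<in> \<sigma> j"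
    by blast
  show "dist (fst p) (fst q) > snd p"
  proof (cases "i = j")
    case True
    with packing[OF ij(1)] ij \<open>p \<noteq> q\<close> show ?thesis
      unfolding packing_def by blast
  next
    case False
    with ij centres separated have "\<eta> < dist (fst p) (fst q)"
      by blast
    with radii[OF ij(1,3)] show ?thesis
      by linarith
  qed
qed

lemma fine_packing_UN_separated:
  fixes \<sigma> :: "nat \<Rightarrow> ('a::metric_space \<times> real) set"
  assumes \<sigma>: "\<And>i. i < m \<Longrightarrow> fine_packing dist \<Delta> (min \<delta> \<eta>) (S i) (\<sigma> i)"
    and separated: "\<And>i j x y. i < m \<Longrightarrow> j < m \<Longrightarrow> i \<noteq> j \<Longrightarrow> x \<in> S i \<Longrightarrow> y \<in> S j \<Longrightarrow> \<eta> < dist x y"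
  shows "fine_packing dist \<Delta> \<delta> UNIV (\<Union>i<m. \<sigma> i)"
proof -
  have "packing dist (\<Union>i<m. \<sigma> i)"
  proof (rule packing_UN_separated)
    show "packing dist (\<sigma> i)" "fst ` \<sigma> i \<subseteq> S i" if "i \<in> {..<m}" for i
      using \<sigma> that unfolding fine_packing_def by auto
    show "snd p \<le> \<eta>" if "i \<in> {..<m}" "p \<in> \<sigma> i" for i p
      using \<sigma> that unfolding fine_packing_def by fastforce
  qed (use separated in simp)
  moreover have "finite (\<Union>i<m. \<sigma> i)"
    using \<sigma> unfolding fine_packing_def by simp
  moreover have "snd p \<in> \<Delta> \<and> snd p \<le> \<delta>" if p: "p \<in> (\<Union>i<m. \<sigma> i)" for p
  proof -
    obtain i where "i < m" "p \<in> \<sigma> i"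
      using p by blast
    with \<sigma>[of i] show ?thesis
      unfolding fine_packing_def by auto
  qed
  ultimately show ?thesis
    unfolding fine_packing_def by (simp add: image_subset_iff)
qed

lemma centres_separated_disjoint:
  fixes A B :: "('a::metric_space \<times> real) set"
  assumes "fst ` A \<subseteq> S" "fst ` B \<subseteq> T" "\<And>x y. x \<in> S \<Longrightarrow> y \<in> T \<Longrightarrow> \<eta> < dist x y" "\<eta> \<ge> 0"
  shows "A \<inter> B = {}"
proof (rule ccontr)
  assume "A \<inter> B \<noteq> {}"
  then obtain p where "p \<in> A" "p \<in> B"
    by blast
  then have "fst p \<in> S" "fst p \<in> T"
    using assms(1,2) by auto
  with assms(3)[of "fst p" "fst p"] assms(4) show False
    by simp
qed

lemma eventually_far_from_closed:
  fixes K :: "'i \<Rightarrow> 'a::metric_space set"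
  assumes "finite L" "\<And>l. l \<in> L \<Longrightarrow> closed (K l)" "\<And>l. l \<in> L \<Longrightarrow> x \<notin> K l"
  obtains n where "\<And>l y. l \<in> L \<Longrightarrow> y \<in> K l \<Longrightarrow> 1 / real (Suc n) < dist x y"
proof -
  have "\<forall>\<^sub>F n in sequentially. \<forall>y\<in>K l. 1 / real (Suc n) < dist x y" if l: "l \<in> L" for l
  proof -
    obtain r where r: "r > 0" "ball x r \<subseteq> - K l"
      using assms(2,3)[OF l] by (meson ComplI open_Compl open_contains_ball)
    obtain N :: nat where N: "1 / real (Suc N) < r"
      using r(1) by (metis nat_approx_posE of_nat_Suc)
    have "1 / real (Suc n) < dist x y" if "N \<le> n" "y \<in> K l" for n y
    proof -
      have "1 / real (Suc n) \<le> 1 / real (Suc N)"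
        using that(1) by (intro divide_left_mono) auto
      moreover have "r \<le> dist x y"
        using r(2) that(2) by (auto simp: subset_eq not_less)
      ultimately show ?thesis
        using N by linarith
    qed
    then show ?thesis
      unfolding eventually_sequentially by blast
  qed
  then have "\<forall>\<^sub>F n in sequentially. \<forall>l\<in>L. \<forall>y\<in>K l. 1 / real (Suc n) < dist x y"
    using assms(1) by (simp add: eventually_ball_finite)
  then show ?thesis
    using that by (metis (no_types, lifting) eventually_happens' sequentially_bot)
qed

lemma far_parts:
  fixes K :: "'i \<Rightarrow> 'a::metric_space set"
  assumes "finite L" "\<And>l. l \<in> L \<Longrightarrow> closed (K l)" "\<And>l. l \<in> L \<Longrightarrow> A \<inter> K l = {}"
  shows "incseq (\<lambda>n. {x \<in> A. \<forall>l\<in>L. \<forall>y\<in>K l. 1 / real (Suc n) < dist x y})"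
    and "(\<Union>n. {x \<in> A. \<forall>l\<in>L. \<forall>y\<in>K l. 1 / real (Suc n) < dist x y}) = A"
proof -
  show "incseq (\<lambda>n. {x \<in> A. \<forall>l\<in>L. \<forall>y\<in>K l. 1 / real (Suc n) < dist x y})"
  proof (rule incseq_SucI)
    fix n
    have "1 / real (Suc (Suc n)) \<le> 1 / real (Suc n)"
      by (intro divide_left_mono) auto
    then show "{x \<in> A. \<forall>l\<in>L. \<forall>y\<in>K l. 1 / real (Suc n) < dist x y}
        \<subseteq> {x \<in> A. \<forall>l\<in>L. \<forall>y\<in>K l. 1 / real (Suc (Suc n)) < dist x y}"
      by (auto intro: le_less_trans)
  qed
  have "x \<in> (\<Union>n. {x \<in> A. \<forall>l\<in>L. \<forall>y\<in>K l. 1 / real (Suc n) < dist x y})" if x: "x \<in> A" for x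
  proof -
    obtain n where "\<And>l y. l \<in> L \<Longrightarrow> y \<in> K l \<Longrightarrow> 1 / real (Suc n) < dist x y"
      using eventually_far_from_closed[of L K x] assms x by blast
    with x show ?thesis
      by blast
  qed
  then show "(\<Union>n. {x \<in> A. \<forall>l\<in>L. \<forall>y\<in>K l. 1 / real (Suc n) < dist x y}) = A"
    by blast
qed

lemma sum_SUP_le:
  fixes v :: "'i \<Rightarrow> 'c \<Rightarrow> ennreal"
  assumes "finite I" "\<And>i. i \<in> I \<Longrightarrow> Q i \<noteq> {}"
    and "\<And>\<sigma>. (\<And>i. i \<in> I \<Longrightarrow> \<sigma> i \<in> Q i) \<Longrightarrow> (\<Sum>i\<in>I. v i (\<sigma> i)) \<le> s"
  shows "(\<Sum>i\<in>I. SUP x\<in>Q i. v i x) \<le> s"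
proof -
  have "t + (\<Sum>i\<in>I. SUP x\<in>Q i. v i x) \<le> s"
    if "\<And>\<sigma>. (\<And>i. i \<in> I \<Longrightarrow> \<sigma> i \<in> Q i) \<Longrightarrow> t + (\<Sum>i\<in>I. v i (\<sigma> i)) \<le> s" for t
    using assms(1,2) that
  proof (induction I arbitrary: t rule: finite_induct)
    case empty
    then show ?case
      using empty.prems(2)[of "\<lambda>_. undefined"] by simp
  next
    case (insert a I)
    let ?R = "\<Sum>i\<in>I. SUP x\<in>Q i. v i x"
    have "v a x + (t + ?R) \<le> s" if x: "x \<in> Q a" for x
    proof -
      have "(t + v a x) + ?R \<le> s"
      proof (rule insert.IH)
        fix \<sigma> assume \<sigma>: "\<And>i. i \<in> I \<Longrightarrow> \<sigma> i \<in> Q i"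
        have "(\<Sum>i\<in>I. v i ((\<sigma>(a := x)) i)) = (\<Sum>i\<in>I. v i (\<sigma> i))"
          using insert.hyps(2) by (intro sum.cong) auto
        moreover have "t + (\<Sum>i\<in>insert a I. v i ((\<sigma>(a := x)) i)) \<le> s"
          using \<sigma> x by (intro insert.prems(2)) auto
        ultimately show "t + v a x + (\<Sum>i\<in>I. v i (\<sigma> i)) \<le> s"
          using insert.hyps by (simp add: add.assoc)
      qed (use insert.prems(1) in auto)
      then show ?thesis
        by (simp add: ac_simps)
    qed
    then have "(SUP x\<in>Q a. v a x + (t + ?R)) \<le> s"
      by (rule SUP_least)
    moreover have "(SUP x\<in>Q a. v a x + (t + ?R)) = (SUP x\<in>Q a. v a x) + (t + ?R)"
      using insert.prems(1)[of a] by (simp add: ennreal_SUP_add_left)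
    ultimately show ?case
      using insert.hyps by (simp add: ac_simps)
  qed
  from this[of 0] assms(3) show ?thesis
    by simp
qed

lemma sum_nested_swap:
  fixes c a :: "nat \<Rightarrow> 'a::comm_semiring_1"
  shows "(\<Sum>j<m. c j * (\<Sum>i\<in>{j..<m}. a i)) = (\<Sum>i<m. (\<Sum>j\<le>i. c j) * a i)"
proof (induction m)
  case (Suc m)
  have "(\<Sum>j<Suc m. c j * (\<Sum>i\<in>{j..<Suc m}. a i))
      = (\<Sum>j<m. c j * (\<Sum>i\<in>{j..<m}. a i)) + (\<Sum>j\<le>m. c j) * a m"
    by (simp add: lessThan_Suc_atMost[symmetric] distrib_left distrib_right sum.distrib sum_distrib_right)
  with Suc show ?case
    by simp
qed simp

lemma antimono_eq_UN_differences:
  fixes H :: "nat \<Rightarrow> 'a set"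
  assumes "\<And>i. H (Suc i) \<subseteq> H i" "H m = {}" "j \<le> m"
  shows "H j = (\<Union>i\<in>{j..<m}. H i - H (Suc i))"
  using assms(3)
proof (induction j rule: inc_induct)
  case (step n)
  then have "{n..<m} = insert n {Suc n..<m}"
    by auto
  with step.IH assms(1)[of n] show ?case
    by auto
qed (simp add: assms(2))

lemma disjoint_differences_antimono:
  fixes H :: "nat \<Rightarrow> 'a set"
  assumes "\<And>j. H (Suc j) \<subseteq> H j" "i \<noteq> j"
  shows "(H i - H (Suc i)) \<inter> (H j - H (Suc j)) = {}"
proof -
  have "(H i - H (Suc i)) \<inter> (H j - H (Suc j)) = {}" if "i < j" for i j
    using lift_Suc_antimono_le[of H, OF assms(1), of "Suc i" j] that by auto
  with assms(2) show ?thesis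
    by (metis inf_commute linorder_neqE_nat)
qed

lemma emeasure_eq_sum_differences:
  fixes H :: "nat \<Rightarrow> 'a set"
  assumes "\<And>j. H j \<in> sets M" "\<And>j. H (Suc j) \<subseteq> H j" "H m = {}" "j \<le> m"
  shows "emeasure M (H j) = (\<Sum>i\<in>{j..<m}. emeasure M (H i - H (Suc i)))"
proof -
  have "emeasure M (H j) = emeasure M (\<Union>i\<in>{j..<m}. H i - H (Suc i))"
    using antimono_eq_UN_differences[of H m j] assms(2-4) by simp
  also have "\<dots> = (\<Sum>i\<in>{j..<m}. emeasure M (H i - H (Suc i)))"
    using assms(1,2) disjoint_differences_antimono[of H]
    by (intro sum_emeasure[symmetric]) (auto simp: disjoint_family_on_def)
  finally show ?thesis .
qed

section \<open>The packing measure on Borel sets\<close>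

lemma sigma_sets_borel: "sigma_sets UNIV (sets borel) = sets borel"
  using sets.sigma_sets_eq[of borel] by simp

text \<open>\<open>Pmeasure\<close> is built with \<open>measure_of\<close>, which returns the null measure unless \<open>Pmeas\<close> is
  a measure on the Borel sets; the locale assumes that it is.\<close>
locale borel_packing_measure =
  fixes \<Delta> :: "real set" and h :: "real \<Rightarrow> real" and M :: "'a::metric_space measure"
  assumes M_def: "M = Pmeasure \<Delta> h"
    and measure_space: "measure_space UNIV (sets borel) (Pmeas dist \<Delta> h :: 'a set \<Rightarrow> ennreal)"
    and h_pos: "\<And>t. t > 0 \<Longrightarrow> h t > 0"
begin

abbreviation P :: "'a set \<Rightarrow> ennreal"
  where "P \<equiv> Pmeas dist \<Delta> h"

abbreviation W :: "('a \<Rightarrow> real) \<Rightarrow> real \<Rightarrow> ennreal"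
  where "W \<equiv> weighted_Pdelta dist \<Delta> h"

lemma sets_M [measurable_cong]: "sets M = sets borel"
  unfolding M_def Pmeasure_def by (simp add: sets_measure_of_conv sigma_sets_borel)

lemma emeasure_M: "B \<in> sets borel \<Longrightarrow> emeasure M B = P B"
  using measure_space unfolding M_def Pmeasure_def by (simp add: emeasure_measure_of_conv sigma_sets_borel)

lemma P_borel_hull:
  obtains H where "H \<in> sets borel" "A \<subseteq> H" "emeasure M H = P A"
  using Pmeas_borel_hull[of A \<Delta> h] emeasure_M by metis

lemma P_le_emeasure: "B \<in> sets borel \<Longrightarrow> A \<subseteq> B \<Longrightarrow> P A \<le> emeasure M B"
  using emeasure_M Pmeas_mono by metis

lemma P_subadditive: "P (A \<union> B) \<le> P A + P B"
proof -
  obtain HA HB where "HA \<in> sets borel" "A \<subseteq> HA" "emeasure M HA = P A"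
    "HB \<in> sets borel" "B \<subseteq> HB" "emeasure M HB = P B"
    using P_borel_hull by metis
  moreover from this have "P (A \<union> B) \<le> emeasure M (HA \<union> HB)"
    by (intro P_le_emeasure) auto
  moreover have "emeasure M (HA \<union> HB) \<le> emeasure M HA + emeasure M HB"
    using calculation sets_M by (intro emeasure_subadditive) auto
  ultimately show ?thesis
    by simp
qed

lemma P_incseq_SUP:
  assumes "incseq A"
  shows "P (\<Union>n. A n) = (SUP n. P (A n))"
proof (rule antisym)
  have "\<forall>n. \<exists>H. H \<in> sets borel \<and> A n \<subseteq> H \<and> emeasure M H = P (A n)"
    by (metis P_borel_hull)
  then obtain H where H: "\<And>n. H n \<in> sets borel" "\<And>n. A n \<subseteq> H n" "\<And>n. emeasure M (H n) = P (A n)"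
    by metis
  define H' where "H' n = (\<Inter>m\<in>{n..}. H m)" for n
  have H'_borel: "H' n \<in> sets borel" for n
    unfolding H'_def using H(1) by (intro sets.countable_INT') auto
  have "A n \<subseteq> H' n" for n
    unfolding H'_def using H(2) assms by (auto simp: incseq_def) blast
  then have "P (\<Union>n. A n) \<le> emeasure M (\<Union>n. H' n)"
    using H'_borel by (intro P_le_emeasure) auto
  also have "\<dots> = (SUP n. emeasure M (H' n))"
    using H'_borel sets_M by (intro SUP_emeasure_incseq[symmetric]) (auto simp: H'_def incseq_def)
  also have "\<dots> \<le> (SUP n. P (A n))"
    using H'_borel H(1) sets_M by (intro SUP_mono) (auto intro!: emeasure_mono simp: H'_def H(3)[symmetric])
  finally show "P (\<Union>n. A n) \<le> (SUP n. P (A n))" .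
  show "(SUP n. P (A n)) \<le> P (\<Union>n. A n)"
    by (intro SUP_least Pmeas_mono) blast
qed

lemma sum_weight_le:
  assumes "C \<ge> 0" "\<And>p. p \<in> \<pi> \<Longrightarrow> C \<le> u (fst p)" "packing dist \<pi>"
  shows "ennreal C * (\<Sum>p\<in>\<pi>. ennreal (h (snd p))) \<le> (\<Sum>p\<in>\<pi>. ennreal (u (fst p) * h (snd p)))"
  unfolding sum_distrib_left
proof (rule sum_mono)
  fix p assume p: "p \<in> \<pi>"
  then have h: "h (snd p) \<ge> 0"
    using assms(3) h_pos unfolding packing_def by (simp add: less_imp_le)
  then have "ennreal C * ennreal (h (snd p)) = ennreal (C * h (snd p))"
    using assms(1) by (simp add: ennreal_mult)
  also have "\<dots> \<le> ennreal (u (fst p) * h (snd p))"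
    using assms(2)[OF p] h by (intro ennreal_leI mult_right_mono)
  finally show "ennreal C * ennreal (h (snd p)) \<le> ennreal (u (fst p) * h (snd p))" .
qed

text \<open>Packings of sets at mutual distance \<open>> \<eta>\<close> with radii \<open>\<le> \<eta>\<close> combine into one packing.\<close>
lemma separated_sets_le:
  fixes S :: "nat \<Rightarrow> 'a set" and C :: "nat \<Rightarrow> real"
  assumes C_nonneg: "\<And>i. i < m \<Longrightarrow> C i \<ge> 0"
    and C_le_u: "\<And>i x. i < m \<Longrightarrow> x \<in> S i \<Longrightarrow> C i \<le> u x"
    and separated: "\<And>i j x y. i < m \<Longrightarrow> j < m \<Longrightarrow> i \<noteq> j \<Longrightarrow> x \<in> S i \<Longrightarrow> y \<in> S j \<Longrightarrow> \<eta> < dist x y"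
    and "\<eta> > 0" "\<delta> > 0"
  shows "(\<Sum>i<m. ennreal (C i) * P (S i)) \<le> W u \<delta>"
proof -
  define Q where "Q i = Collect (fine_packing dist \<Delta> (min \<delta> \<eta>) (S i))" for i
  have "ennreal (C i) * P (S i) \<le> (SUP \<pi>\<in>Q i. ennreal (C i) * (\<Sum>p\<in>\<pi>. ennreal (h (snd p))))" for i
  proof -
    have "P (S i) \<le> Pdelta dist \<Delta> h (min \<delta> \<eta>) (S i)"
      using Pmeas_le_P0 P0_le_Pdelta assms(4,5) by (metis min_less_iff_conj order_trans)
    then show ?thesis
      unfolding Pdelta_def Q_def by (simp add: SUP_mult_left_ennreal[symmetric] mult_left_mono)
  qed
  then have "(\<Sum>i<m. ennreal (C i) * P (S i))
      \<le> (\<Sum>i<m. SUP \<pi>\<in>Q i. ennreal (C i) * (\<Sum>p\<in>\<pi>. ennreal (h (snd p))))"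
    by (rule sum_mono)
  also have "\<dots> \<le> W u \<delta>"
  proof (rule sum_SUP_le)
    have "fine_packing dist \<Delta> (min \<delta> \<eta>) (S i) {}" for i
      unfolding fine_packing_def packing_def by simp
    then show "Q i \<noteq> {}" for i
      unfolding Q_def by blast
    fix \<sigma> assume \<sigma>: "\<And>i. i \<in> {..<m} \<Longrightarrow> \<sigma> i \<in> Q i"
    then have \<sigma>_packing: "fine_packing dist \<Delta> (min \<delta> \<eta>) (S i) (\<sigma> i)" if "i < m" for i
      using that unfolding Q_def by simp
    have union: "fine_packing dist \<Delta> \<delta> UNIV (\<Union>i<m. \<sigma> i)"
      using \<sigma>_packing separated by (rule fine_packing_UN_separated)
    have "\<sigma> i \<inter> \<sigma> j = {}" if ij: "i < m" "j < m" "i \<noteq> j" for i j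
      using \<sigma>_packing[OF ij(1)] \<sigma>_packing[OF ij(2)] separated[OF ij] \<open>\<eta> > 0\<close>
      unfolding fine_packing_def by (intro centres_separated_disjoint[of _ "S i" _ "S j" \<eta>]) auto
    then have "(\<Sum>i<m. \<Sum>p\<in>\<sigma> i. ennreal (u (fst p) * h (snd p)))
        = (\<Sum>p\<in>(\<Union>i<m. \<sigma> i). ennreal (u (fst p) * h (snd p)))"
      using \<sigma>_packing unfolding fine_packing_def by (intro sum.UNION_disjoint[symmetric]) auto
    also have "\<dots> \<le> W u \<delta>"
      using union by (rule sum_le_weighted_Pdelta)
    finally have "(\<Sum>i<m. \<Sum>p\<in>\<sigma> i. ennreal (u (fst p) * h (snd p))) \<le> W u \<delta>" .
    moreover have "ennreal (C i) * (\<Sum>p\<in>\<sigma> i. ennreal (h (snd p)))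
        \<le> (\<Sum>p\<in>\<sigma> i. ennreal (u (fst p) * h (snd p)))" if "i < m" for i
      using \<sigma>_packing[OF that] C_nonneg[OF that] C_le_u[OF that]
      by (intro sum_weight_le) (auto simp: fine_packing_def)
    ultimately show "(\<Sum>i\<in>{..<m}. ennreal (C i) * (\<Sum>p\<in>\<sigma> i. ennreal (h (snd p)))) \<le> W u \<delta>"
      by (meson lessThan_iff order_trans sum_mono)
  qed simp
  finally show ?thesis .
qed

text \<open>Closed disjoint sets need not have positive distance, but their points eventually
  lie at distance \<open>> 1/(n+1)\<close> from the other sets, so separated pieces exhaust them.\<close>
lemma closed_parts_le:
  fixes G K :: "nat \<Rightarrow> 'a set" and C :: "nat \<Rightarrow> real"
  assumes K_closed: "\<And>i. i < m \<Longrightarrow> closed (K i)"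
    and K_disjoint: "\<And>i j. i < m \<Longrightarrow> j < m \<Longrightarrow> i \<noteq> j \<Longrightarrow> K i \<inter> K j = {}"
    and C_nonneg: "\<And>i. i < m \<Longrightarrow> C i \<ge> 0"
    and C_le_u: "\<And>i x. i < m \<Longrightarrow> x \<in> G i \<Longrightarrow> C i \<le> u x"
    and "\<delta> > 0"
  shows "(\<Sum>i<m. ennreal (C i) * P (G i \<inter> K i)) \<le> W u \<delta>"
proof -
  define U where "U i n = {x \<in> G i \<inter> K i. \<forall>l\<in>{l. l < m \<and> l \<noteq> i}. \<forall>y\<in>K l. 1 / real (Suc n) < dist x y}"
    for i n
  have U: "incseq (U i)" "(\<Union>n. U i n) = G i \<inter> K i" if "i < m" for i
    unfolding U_def using K_closed K_disjoint[OF that] by (intro far_parts; force)+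
  have "(\<Sum>i<m. ennreal (C i) * P (U i n)) \<le> W u \<delta>" for n
  proof (rule separated_sets_le[where \<eta>="1 / real (Suc n)"])
    show "C i \<le> u x" if "i < m" "x \<in> U i n" for i x
      using C_le_u that unfolding U_def by blast
    show "1 / real (Suc n) < dist x y" if "i < m" "j < m" "i \<noteq> j" "x \<in> U i n" "y \<in> U j n" for i j x y
      using that unfolding U_def by blast
  qed (use C_nonneg \<open>\<delta> > 0\<close> in auto)
  then have "(SUP n. \<Sum>i<m. ennreal (C i) * P (U i n)) \<le> W u \<delta>"
    by (intro SUP_least)
  moreover have "(SUP n. \<Sum>i<m. ennreal (C i) * P (U i n)) = (\<Sum>i<m. SUP n. ennreal (C i) * P (U i n))"
    using U(1) by (intro ennreal_SUP_sum) (auto simp: incseq_def intro!: mult_left_mono Pmeas_mono)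
  moreover have "(SUP n. ennreal (C i) * P (U i n)) = ennreal (C i) * P (G i \<inter> K i)" if "i < m" for i
    using P_incseq_SUP[OF U(1)[OF that]] U(2)[OF that] by (simp add: SUP_mult_left_ennreal)
  ultimately show ?thesis
    by simp
qed

text \<open>Inner regularity reduces disjoint Borel pieces to disjoint closed pieces.\<close>
lemma disjoint_sets_le:
  fixes G D :: "nat \<Rightarrow> 'a set" and C :: "nat \<Rightarrow> real"
  assumes D_borel: "\<And>i. i < m \<Longrightarrow> D i \<in> sets borel"
    and D_disjoint: "\<And>i j. i < m \<Longrightarrow> j < m \<Longrightarrow> i \<noteq> j \<Longrightarrow> D i \<inter> D j = {}"
    and D_finite: "\<And>i. i < m \<Longrightarrow> emeasure M (D i) < \<infinity>"
    and G_subset: "\<And>i. i < m \<Longrightarrow> G i \<subseteq> D i"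
    and C_nonneg: "\<And>i. i < m \<Longrightarrow> C i \<ge> 0"
    and C_le_u: "\<And>i x. i < m \<Longrightarrow> x \<in> G i \<Longrightarrow> C i \<le> u x"
    and "\<delta> > 0"
  shows "(\<Sum>i<m. ennreal (C i) * P (G i)) \<le> W u \<delta>"
proof (rule ennreal_le_epsilon)
  fix e :: real assume "e > 0"
  define \<eta> where "\<eta> = e / (1 + (\<Sum>i<m. C i))"
  have sum_C: "(\<Sum>i<m. C i) \<ge> 0"
    using C_nonneg by (intro sum_nonneg) auto
  then have "\<eta> > 0"
    unfolding \<eta>_def using \<open>e > 0\<close> by simp
  have "\<forall>i. \<exists>K. i < m \<longrightarrow> closed K \<and> K \<subseteq> D i \<and> emeasure M (D i - K) < ennreal \<eta>"
    using emeasure_closed_inner_approx[OF sets_M D_borel D_finite \<open>\<eta> > 0\<close>] by metis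
  then obtain K where K: "\<And>i. i < m \<Longrightarrow> closed (K i)" "\<And>i. i < m \<Longrightarrow> K i \<subseteq> D i"
    "\<And>i. i < m \<Longrightarrow> emeasure M (D i - K i) < ennreal \<eta>"
    by metis
  have "P (G i) \<le> P (G i \<inter> K i) + ennreal \<eta>" if i: "i < m" for i
  proof -
    have "P (G i) \<le> P (G i \<inter> K i) + P (G i - K i)"
      using P_subadditive[of "G i \<inter> K i" "G i - K i"] by (simp add: Int_Diff_Un)
    moreover have "P (G i - K i) \<le> emeasure M (D i - K i)"
      using D_borel[OF i] K(1)[OF i] G_subset[OF i] by (intro P_le_emeasure) auto
    ultimately show ?thesis
      using K(3)[OF i] by (meson add_left_mono less_imp_le order_trans)
  qed
  then have "(\<Sum>i<m. ennreal (C i) * P (G i)) \<le> (\<Sum>i<m. ennreal (C i) * (P (G i \<inter> K i) + ennreal \<eta>))"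
    by (intro sum_mono mult_left_mono) auto
  also have "\<dots> = (\<Sum>i<m. ennreal (C i) * P (G i \<inter> K i)) + (\<Sum>i<m. ennreal (C i) * ennreal \<eta>)"
    by (simp add: distrib_left sum.distrib)
  also have "(\<Sum>i<m. ennreal (C i) * P (G i \<inter> K i)) \<le> W u \<delta>"
  proof (rule closed_parts_le[OF K(1) _ C_nonneg C_le_u \<open>\<delta> > 0\<close>])
    show "K i \<inter> K j = {}" if "i < m" "j < m" "i \<noteq> j" for i j
      using K(2)[OF that(1)] K(2)[OF that(2)] D_disjoint[OF that] by blast
  qed
  also have "(\<Sum>i<m. ennreal (C i) * ennreal \<eta>) = (\<Sum>i<m. ennreal (C i * \<eta>))"
    using C_nonneg \<open>\<eta> > 0\<close> by (intro sum.cong) (auto simp: ennreal_mult)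
  also have "\<dots> = ennreal ((\<Sum>i<m. C i) * \<eta>)"
    using C_nonneg \<open>\<eta> > 0\<close> by (subst sum_ennreal) (auto simp: sum_distrib_right)
  also have "(\<Sum>i<m. C i) * \<eta> \<le> e"
    unfolding \<eta>_def using sum_C \<open>e > 0\<close> by (simp add: field_simps)
  finally show "(\<Sum>i<m. ennreal (C i) * P (G i)) \<le> W u \<delta> + ennreal e"
    by (simp add: add_left_mono ennreal_leI)
qed

lemma P_finite_if_weighted:
  assumes "c > 0" "\<And>x. x \<in> B \<Longrightarrow> c \<le> u x" "W u \<delta> < \<infinity>" "\<delta> > 0"
  shows "P B < \<infinity>"
proof -
  have "(\<Sum>i<(1::nat). ennreal c * P B) \<le> W u \<delta>"
    by (rule separated_sets_le[where \<eta>=1 and C="\<lambda>_. c" and S="\<lambda>_. B" and m=1]) (use assms in auto)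
  with assms(3) have "ennreal c * P B < \<infinity>"
    by simp
  with assms(1) show ?thesis
    by (auto simp: ennreal_mult_less_top)
qed

lemma P_nested_hull:
  assumes nested: "\<And>i j. i \<le> j \<Longrightarrow> j < m \<Longrightarrow> B j \<subseteq> B i"
  obtains H where "\<And>j. H j \<in> sets borel" "\<And>j. H (Suc j) \<subseteq> H j" "H m = {}"
    "\<And>j. j < m \<Longrightarrow> B j \<subseteq> H j" "\<And>j. j < m \<Longrightarrow> emeasure M (H j) = P (B j)"
proof -
  have "\<forall>j. \<exists>H. H \<in> sets borel \<and> B j \<subseteq> H \<and> emeasure M H = P (B j)"
    by (metis P_borel_hull)
  then obtain H0 where H0: "\<And>j. H0 j \<in> sets borel" "\<And>j. B j \<subseteq> H0 j" "\<And>j. emeasure M (H0 j) = P (B j)"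
    by metis
  define H where "H j = (if j < m then (\<Inter>i\<le>j. H0 i) else {})" for j
  have H_borel: "H j \<in> sets borel" for j
    unfolding H_def using H0(1) by auto
  have B_H: "B j \<subseteq> H j" if "j < m" for j
    unfolding H_def using that H0(2) nested by fastforce
  have H_emeasure: "emeasure M (H j) = P (B j)" if "j < m" for j
  proof (rule antisym)
    have "emeasure M (H j) \<le> emeasure M (H0 j)"
      using H_borel H0(1) sets_M that by (intro emeasure_mono) (auto simp: H_def)
    then show "emeasure M (H j) \<le> P (B j)"
      using H0(3) by simp
    show "P (B j) \<le> emeasure M (H j)"
      using H_borel B_H[OF that] by (intro P_le_emeasure)
  qed
  have "H (Suc j) \<subseteq> H j" for j
    unfolding H_def by auto
  with that[OF H_borel _ _ B_H H_emeasure] show ?thesis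
    by (simp add: H_def)
qed

lemma emeasure_Diff_le_P:
  assumes "H \<in> sets borel" "H' \<in> sets borel" "H' \<subseteq> H" "A \<subseteq> H"
    and "emeasure M H = P A" "emeasure M H' < \<infinity>"
  shows "emeasure M (H - H') \<le> P (A - H')"
proof -
  have "emeasure M H = emeasure M (H - H') + emeasure M H'"
    using assms(1-3) sets_M by (subst plus_emeasure) (auto intro: arg_cong[where f="emeasure M"])
  moreover have "P A \<le> P (A - H') + emeasure M H'"
  proof -
    have "P A \<le> P (A - H') + P (A \<inter> H')"
      using P_subadditive[of "A - H'" "A \<inter> H'"] by (simp add: Un_Diff_Int)
    moreover have "P (A \<inter> H') \<le> emeasure M H'"
      using assms(2) by (intro P_le_emeasure) auto
    ultimately show ?thesis
      by (meson add_left_mono order_trans)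
  qed
  ultimately have "emeasure M H' + emeasure M (H - H') \<le> emeasure M H' + P (A - H')"
    using assms(5) by (simp add: add.commute)
  then show ?thesis
    using assms(6) by (auto simp: ennreal_add_left_cancel_le)
qed

text \<open>Decompose the nested sets into the disjoint layers \<open>D\<^sub>j = H\<^sub>j - H\<^sub>j\<^sub>+\<^sub>1\<close> of a nested
  Borel hull; summation by parts turns the weights \<open>c\<^sub>j\<close> on the \<open>B\<^sub>j\<close> into the
  cumulative weights \<open>\<Sum>\<^sub>i\<^sub>\<le>\<^sub>j c\<^sub>i\<close> on the layers.\<close>
lemma nested_sets_le:
  fixes B :: "nat \<Rightarrow> 'a set" and c :: "nat \<Rightarrow> real"
  assumes nested: "\<And>i j. i \<le> j \<Longrightarrow> j < m \<Longrightarrow> B j \<subseteq> B i"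
    and c_pos: "\<And>j. j < m \<Longrightarrow> c j > 0"
    and u_ge: "\<And>x. (\<Sum>j\<in>{j. j < m \<and> x \<in> B j}. c j) \<le> u x"
    and "\<delta> > 0"
  shows "(\<Sum>j<m. ennreal (c j) * P (B j)) \<le> W u \<delta>"
proof (cases "W u \<delta> = \<infinity>")
  case False
  obtain H where H: "\<And>j. H j \<in> sets borel" "\<And>j. H (Suc j) \<subseteq> H j" "H m = {}"
    "\<And>j. j < m \<Longrightarrow> B j \<subseteq> H j" "\<And>j. j < m \<Longrightarrow> emeasure M (H j) = P (B j)"
    using P_nested_hull[of m B, OF nested] by blast
  define D where "D j = H j - H (Suc j)" for j
  have D_borel: "D j \<in> sets borel" for j
    unfolding D_def using H(1) by auto
  have D_disjoint: "D i \<inter> D j = {}" if "i \<noteq> j" for i j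
    unfolding D_def using H(2) that by (rule disjoint_differences_antimono)
  have sum_c_le_u: "(\<Sum>j\<in>J. c j) \<le> u x" if "J \<subseteq> {j. j < m \<and> x \<in> B j}" for J x
    using that c_pos by (intro order_trans[OF sum_mono2 u_ge]) (auto intro: less_imp_le)
  have P_finite: "P (B j) < \<infinity>" if "j < m" for j
    using c_pos[OF that] sum_c_le_u[of "{j}"] that False \<open>\<delta> > 0\<close>
    by (intro P_finite_if_weighted[where c="c j" and u=u and \<delta>=\<delta>]) (auto simp: top.not_eq_extremum)
  have H_finite: "emeasure M S < \<infinity>" if "S \<in> sets borel" "S \<subseteq> H j" "j < m" for S j
  proof -
    have "emeasure M S \<le> emeasure M (H j)"
      using that H(1) sets_M by (intro emeasure_mono) auto
    then show ?thesis
      using H(5)[OF that(3)] P_finite[OF that(3)] by simp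
  qed
  have emeasure_H: "emeasure M (H j) = (\<Sum>i\<in>{j..<m}. emeasure M (D i))" if "j \<le> m" for j
    unfolding D_def using H(1-3) sets_M that by (intro emeasure_eq_sum_differences) auto
  have D_le_P: "emeasure M (D j) \<le> P (B j \<inter> D j)" if "j < m" for j
  proof -
    have "emeasure M (H (Suc j)) < \<infinity>"
      using H(1,2) that by (intro H_finite)
    then have "emeasure M (H j - H (Suc j)) \<le> P (B j - H (Suc j))"
      using H that by (intro emeasure_Diff_le_P) auto
    moreover have "B j - H (Suc j) = B j \<inter> D j"
      unfolding D_def using H(4)[OF that] by blast
    ultimately show ?thesis
      unfolding D_def by simp
  qed
  have "(\<Sum>j<m. ennreal (c j) * P (B j)) = (\<Sum>j<m. ennreal (c j) * (\<Sum>i\<in>{j..<m}. emeasure M (D i)))"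
    using H(5) emeasure_H by (intro sum.cong) auto
  also have "\<dots> = (\<Sum>i<m. (\<Sum>j\<le>i. ennreal (c j)) * emeasure M (D i))"
    by (rule sum_nested_swap)
  also have "\<dots> = (\<Sum>i<m. ennreal (\<Sum>j\<le>i. c j) * emeasure M (D i))"
    using c_pos by (intro sum.cong refl arg_cong2[where f=times] sum_ennreal) (auto intro: less_imp_le)
  also have "\<dots> \<le> (\<Sum>i<m. ennreal (\<Sum>j\<le>i. c j) * P (B i \<inter> D i))"
    using D_le_P by (intro sum_mono mult_left_mono) auto
  also have "\<dots> \<le> W u \<delta>"
  proof (rule disjoint_sets_le[OF D_borel D_disjoint _ _ _ _ \<open>\<delta> > 0\<close>])
    show "emeasure M (D i) < \<infinity>" if "i < m" for i
      using D_borel that unfolding D_def by (intro H_finite) auto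
    show "(\<Sum>j\<le>i. c j) \<le> u x" if "i < m" "x \<in> B i \<inter> D i" for i x
      using that nested by (intro sum_c_le_u) auto
    show "(\<Sum>j\<le>i. c j) \<ge> 0" if "i < m" for i
      using c_pos that by (intro sum_nonneg) (simp add: less_imp_le)
  qed (auto simp: D_def)
  finally show ?thesis .
qed simp

text \<open>The weight \<open>u x\<close> collected by \<open>x\<close> on the nested level sets stays below the
  \<open>C\<^sub>r(E\<^sub>x) g(r)\<close> for small \<open>r\<close>, so the lifted packings are packings of \<open>E\<close> and their
  \<open>gh\<close>-sums are bounded by \<open>P0(E)\<close>.\<close>
lemma section_levels_le_P0:
  fixes E :: "('a \<times> 'b::metric_space) set" and g :: "real \<Rightarrow> real" and F :: "nat \<Rightarrow> real"
  assumes g_pos: "\<And>t. t > 0 \<Longrightarrow> g t > 0" and F: "strict_mono F" "F 0 \<ge> 0"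
  shows "(\<Sum>j<m. ennreal (F (Suc j) - F j) * P (section_level g E (F (Suc j)) n))
    \<le> P0 dmax \<Delta> (\<lambda>t. g t * h t) E"
proof -
  define B where "B j = section_level g E (F (Suc j)) n" for j
  define u where "u x = (\<Sum>j\<in>{j. j < m \<and> x \<in> B j}. F (Suc j) - F j)" for x
  have "mono F"
    using F(1) by (rule strict_mono_mono)
  have F_less: "F j < F (Suc j)" for j
    using F(1) by (simp add: strict_mono_Suc_iff)
  have "(\<Sum>j<m. ennreal (F (Suc j) - F j) * P (B j)) \<le> Pdelta dmax \<Delta> (\<lambda>t. g t * h t) \<delta> E"
    if "\<delta> > 0" for \<delta>
  proof -
    define \<delta>' where "\<delta>' = min \<delta> (1 / real (Suc (Suc n)))"
    have "\<delta>' > 0" "\<delta>' \<le> \<delta>" "\<delta>' < 1 / real (Suc n)"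
      unfolding \<delta>'_def using \<open>\<delta> > 0\<close> by (auto simp: min_less_iff_disj divide_strict_left_mono)
    have "(\<Sum>j<m. ennreal (F (Suc j) - F j) * P (B j)) \<le> W u \<delta>'"
    proof (rule nested_sets_le[OF _ _ _ \<open>\<delta>' > 0\<close>])
      show "B j \<subseteq> B i" if "i \<le> j" for i j
        unfolding B_def using that monoD[OF \<open>mono F\<close>] by (intro section_level_antimono) simp
    qed (simp_all add: u_def F_less)
    also have "\<dots> \<le> Pdelta dmax \<Delta> (\<lambda>t. g t * h t) \<delta>' E"
    proof (rule weighted_Pdelta_le_product[OF g_pos h_pos])
      show "u x \<ge> 0" for x
        unfolding u_def using F_less by (intro sum_nonneg) (simp add: less_imp_le)
      show "u x = 0 \<or> ennreal (u x) < Cdelta dist r (xsection E x) * ennreal (g r)"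
        if "0 < r" "r \<le> \<delta>'" for x r
      proof -
        have "u x = 0 \<or> x \<in> section_level g E (u x) n"
          unfolding u_def B_def
          by (rule level_of_telescoping_weights[OF section_level_antimono \<open>mono F\<close> F(2)])
        moreover have "r < 1 / real (Suc n)"
          using that \<open>\<delta>' < 1 / real (Suc n)\<close> by linarith
        ultimately show ?thesis
          using that unfolding section_level_def by blast
      qed
    qed
    also have "\<dots> \<le> Pdelta dmax \<Delta> (\<lambda>t. g t * h t) \<delta> E"
      using \<open>\<delta>' \<le> \<delta>\<close> by (rule Pdelta_mono)
    finally show ?thesis .
  qed
  then show ?thesis
    unfolding P0_eq_INF_Pdelta B_def by (intro INF_greatest) auto
qed

lemma section_level_layers_le:
  fixes E :: "('a \<times> 'b::metric_space) set" and g :: "real \<Rightarrow> real"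
  assumes g_pos: "\<And>t. t > 0 \<Longrightarrow> g t > 0" and \<rho>: "\<rho> > 1"
  shows "(\<Sum>k\<in>{- int N..int N}. ennreal (\<rho> powr k - \<rho> powr (k - 1)) * P (section_level g E (\<rho> powr k) n))
    \<le> P0 dmax \<Delta> (\<lambda>t. g t * h t) E"
proof -
  define F where "F j = \<rho> powr (int j - int N - 1)" for j :: nat
  have "strict_mono F"
    unfolding F_def using \<rho> by (intro strict_monoI) simp
  have "(\<Sum>k\<in>{- int N..int N}. ennreal (\<rho> powr k - \<rho> powr (k - 1)) * P (section_level g E (\<rho> powr k) n))
      = (\<Sum>j<2 * N + 1. ennreal (F (Suc j) - F j) * P (section_level g E (F (Suc j)) n))"
    by (rule sum.reindex_bij_witness[where i="\<lambda>j. int j - int N" and j="\<lambda>k. nat (k + int N)"])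
      (auto simp: F_def algebra_simps)
  also have "\<dots> \<le> P0 dmax \<Delta> (\<lambda>t. g t * h t) E"
    using g_pos \<open>strict_mono F\<close> by (rule section_levels_le_P0) (simp_all add: F_def)
  finally show ?thesis .
qed

lemma upper_integral_le_P0:
  fixes E :: "('a \<times> 'b::metric_space) set" and g :: "real \<Rightarrow> real"
  assumes g_pos: "\<And>t. t > 0 \<Longrightarrow> g t > 0"
  shows "upper_integral M (\<lambda>x. lowerB0 dist g (xsection E x)) \<le> P0 dmax \<Delta> (\<lambda>t. g t * h t) E"
proof (cases "P0 dmax \<Delta> (\<lambda>t. g t * h t) E")
  case (real S)
  define L where "L t = (\<Union>n. section_level g E t n)" for t
  have L_layers: "(\<Sum>k\<in>{- int N..int N}. ennreal (\<rho> powr k - \<rho> powr (k - 1)) * P (L (\<rho> powr k)))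
      \<le> ennreal S" if "\<rho> > 1" for \<rho> N
  proof -
    have "(\<Sum>k\<in>{- int N..int N}. ennreal (\<rho> powr k - \<rho> powr (k - 1)) * P (L (\<rho> powr k)))
        = (\<Sum>k\<in>{- int N..int N}. SUP n. ennreal (\<rho> powr k - \<rho> powr (k - 1)) * P (section_level g E (\<rho> powr k) n))"
      unfolding L_def P_incseq_SUP[OF incseq_section_level] by (simp add: SUP_mult_left_ennreal)
    also have "\<dots> = (SUP n. \<Sum>k\<in>{- int N..int N}. ennreal (\<rho> powr k - \<rho> powr (k - 1)) * P (section_level g E (\<rho> powr k) n))"
      by (intro ennreal_SUP_sum[symmetric])
        (auto simp: incseq_def intro!: mult_left_mono Pmeas_mono monoD[OF incseq_section_level])
    also have "\<dots> \<le> ennreal S"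
      using section_level_layers_le[where g=g and E=E and N=N, OF g_pos that] real
      by (intro SUP_least) simp
    finally show ?thesis .
  qed
  have "\<forall>t. \<exists>H. H \<in> sets borel \<and> L t \<subseteq> H \<and> emeasure M H = P (L t)"
    by (metis P_borel_hull)
  then obtain H where H: "\<And>t. H t \<in> sets borel" "\<And>t. L t \<subseteq> H t" "\<And>t. emeasure M (H t) = P (L t)"
    by metis
  show ?thesis
  proof (rule ennreal_le_epsilon)
    fix e :: real assume "e > 0"
    define \<rho> where "\<rho> = 1 + e / (S + 1)"
    have "\<rho> > 1"
      unfolding \<rho>_def using \<open>e > 0\<close> real by simp
    have upper: "upper_integral M (\<lambda>x. lowerB0 dist g (xsection E x)) \<le> ennreal (\<rho> * S)"
    proof (rule upper_integral_le_geometric_layers[OF \<open>\<rho> > 1\<close>, where H="\<lambda>k. H (\<rho> powr k)"])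
      show "H (\<rho> powr k) \<in> sets M" for k
        using H(1) sets_M by simp
      show "x \<in> H (\<rho> powr k)" if "ennreal (\<rho> powr k) < lowerB0 dist g (xsection E x)" for k x
        using lowerB0_gt_imp_section_level[OF that] H(2) unfolding L_def by blast
      show "(\<Sum>k\<in>{- int N..int N}. ennreal (\<rho> powr k - \<rho> powr (k - 1)) * emeasure M (H (\<rho> powr k)))
          \<le> ennreal S" for N
        using L_layers[OF \<open>\<rho> > 1\<close>] by (simp add: H(3))
    qed
    have "\<rho> * S \<le> S + e"
      unfolding \<rho>_def using real \<open>e > 0\<close> by (simp add: field_simps)
    then have "ennreal (\<rho> * S) \<le> ennreal S + ennreal e"
      using real \<open>e > 0\<close> by (simp add: ennreal_plus[symmetric] ennreal_leI del: ennreal_plus)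
    with upper real show "upper_integral M (\<lambda>x. lowerB0 dist g (xsection E x))
        \<le> P0 dmax \<Delta> (\<lambda>t. g t * h t) E + ennreal e"
      by simp
  qed
qed simp

end

theorem lemma3p3:
  fixes E :: "('a::metric_space \<times> 'b::metric_space) set"
    and \<Delta> :: "real set" and g h :: "real \<Rightarrow> real"
  assumes "scale \<Delta>" and "hausdorff_fun g" and "hausdorff_fun h"
  shows "P0 dmax \<Delta> (\<lambda>t. g t * h t) E \<ge>
         upper_integral (Pmeasure \<Delta> h) (\<lambda>x. lowerB0 dist g (xsection E x))"
proof (cases "measure_space UNIV (sets borel) (Pmeas dist \<Delta> h :: 'a set \<Rightarrow> ennreal)")
  case True
  with assms(3) interpret borel_packing_measure \<Delta> h "Pmeasure \<Delta> h :: 'a measure"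
    by unfold_locales (simp_all add: hausdorff_fun_def)
  show ?thesis
    using upper_integral_le_P0 assms(2) unfolding hausdorff_fun_def by blast
next
  case False
  then have "emeasure (Pmeasure \<Delta> h :: 'a measure) A = 0" for A
    unfolding Pmeasure_def by (simp add: emeasure_measure_of_conv sigma_sets_borel)
  then have "upper_integral (Pmeasure \<Delta> h :: 'a measure) (\<lambda>x. lowerB0 dist g (xsection E x)) \<le> 0"
    unfolding upper_integral_def by (intro INF_lower2[where i="\<lambda>_. \<infinity>"]) auto
  then show ?thesis
    by simp
qed

end
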